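(* Let $k,l\ge1$ be integers. For all finitely encoded one-parameter persistence modules $M,N$ over $\mathbb R$, \[ \mathrm{d}_{\mathrm T_l}(M,N)\le\max\{1,\tfrac lk\}\,\mathrm{d}_{\mathrm T_k}(M,N). \]
   Context: Finitely encoded persistence modules over $\mathbb R$ form an abelian category and each is isomorphic to a finite direct sum of interval modules over intervals of $\mathbb R$ (possibly unbounded, each end open or closed). For $k\ge1$, $\mathrm T_k(M)$ is the sum of the lengths of the $k$ longest intervals in the barcode of $M$ (all intervals if there are fewer than $k$); it is an amplitude (a function to $[0,\infty]$ vanishing on $0$, monotone under sub- and quotient objects and subadditive on short exact sequences). For an amplitude $\alpha$, the path metric $\mathrm{d}_\alpha(M,N)$ is the infimum, over zigzags $M\xleftarrow{\gamma_1}C_1\xrightarrow{\gamma_2}\cdots\xrightarrow{\gamma_n}N$ of finitely encoded modules, of $\sum_i\alpha(\ker\gamma_i)+\alpha(\operatorname{coker}\gamma_i)$ ($\inf\emptyset=\infty$). *)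

theory Defs
  imports Main "HOL-Library.Extended_Real"
begin

text \<open>Every pointwise finite-dimensional vector space over 'k embeds into the ambient
  space of sequences nat => 'k; persistence modules are realised as families of subspaces.\<close>

type_synonym 'k vec = "nat \<Rightarrow> 'k"

definition vzero :: "'k::field vec" where "vzero = (\<lambda>_. 0)"
definition vadd :: "'k::field vec \<Rightarrow> 'k vec \<Rightarrow> 'k vec" where "vadd u v = (\<lambda>i. u i + v i)"
definition vscale :: "'k::field \<Rightarrow> 'k vec \<Rightarrow> 'k vec" where "vscale c v = (\<lambda>i. c * v i)"

definition vsubspace :: "'k::field vec set \<Rightarrow> bool" where
  "vsubspace S \<longleftrightarrow> vzero \<in> S \<and> (\<forall>u\<in>S. \<forall>v\<in>S. vadd u v \<in> S) \<and> (\<forall>c. \<forall>v\<in>S. vscale c v \<in> S)"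

definition vspan :: "'k::field vec set \<Rightarrow> 'k vec set" where
  "vspan A = {v. \<exists>B c. finite B \<and> B \<subseteq> A \<and> v = (\<lambda>i. \<Sum>b\<in>B. c b * b i)}"

definition fin_dim :: "'k::field vec set \<Rightarrow> bool" where
  "fin_dim S \<longleftrightarrow> (\<exists>B. finite B \<and> B \<subseteq> S \<and> S = vspan B)"

definition lin_on :: "'k::field vec set \<Rightarrow> 'k vec set \<Rightarrow> ('k vec \<Rightarrow> 'k vec) \<Rightarrow> bool" where
  "lin_on S T f \<longleftrightarrow> (\<forall>v\<in>S. f v \<in> T) \<and> (\<forall>u\<in>S. \<forall>v\<in>S. f (vadd u v) = vadd (f u) (f v))
      \<and> (\<forall>c. \<forall>v\<in>S. f (vscale c v) = vscale c (f v))"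

record 'k pmod =
  sp :: "real \<Rightarrow> 'k vec set"
  mp :: "real \<Rightarrow> real \<Rightarrow> 'k vec \<Rightarrow> 'k vec"

definition is_pmod :: "('k::field) pmod \<Rightarrow> bool" where
  "is_pmod M \<longleftrightarrow> (\<forall>t. vsubspace (sp M t))
     \<and> (\<forall>s t. s \<le> t \<longrightarrow> lin_on (sp M s) (sp M t) (mp M s t))
     \<and> (\<forall>t. \<forall>v\<in>sp M t. mp M t t v = v)
     \<and> (\<forall>r s t v. r \<le> s \<longrightarrow> s \<le> t \<longrightarrow> v \<in> sp M r \<longrightarrow> mp M s t (mp M r s v) = mp M r t v)"

text \<open>Finitely encoded (Miller): M is isomorphic to the pullback of a module of finite-dimensional
  spaces over a finite poset P along a poset morphism R -> P. Since R is totally ordered the image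
  is a finite chain (so P may be taken inside nat), fibres are intervals, and being such a pullback
  amounts to: pointwise finite dimensional and all structure maps inside one fibre are bijective.\<close>

definition fin_enc :: "('k::field) pmod \<Rightarrow> bool" where
  "fin_enc M \<longleftrightarrow> is_pmod M \<and> (\<forall>t. fin_dim (sp M t))
     \<and> (\<exists>\<pi>::real \<Rightarrow> nat. mono \<pi> \<and> finite (range \<pi>)
          \<and> (\<forall>s t. s \<le> t \<and> \<pi> s = \<pi> t \<longrightarrow> bij_betw (mp M s t) (sp M s) (sp M t)))"

definition is_hom :: "('k::field) pmod \<Rightarrow> 'k pmod \<Rightarrow> (real \<Rightarrow> 'k vec \<Rightarrow> 'k vec) \<Rightarrow> bool" where
  "is_hom M N f \<longleftrightarrow> (\<forall>t. lin_on (sp M t) (sp N t) (f t))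
     \<and> (\<forall>s t v. s \<le> t \<longrightarrow> v \<in> sp M s \<longrightarrow> f t (mp M s t v) = mp N s t (f s v))"

definition pmod_iso :: "('k::field) pmod \<Rightarrow> 'k pmod \<Rightarrow> bool" where
  "pmod_iso M N \<longleftrightarrow> (\<exists>f. is_hom M N f \<and> (\<forall>t. bij_betw (f t) (sp M t) (sp N t)))"

definition kerm :: "('k::field) pmod \<Rightarrow> (real \<Rightarrow> 'k vec \<Rightarrow> 'k vec) \<Rightarrow> 'k pmod" where
  "kerm M f = \<lparr>sp = (\<lambda>t. {v \<in> sp M t. f t v = vzero}), mp = mp M\<rparr>"

definition is_coker :: "('k::field) pmod \<Rightarrow> 'k pmod \<Rightarrow> (real \<Rightarrow> 'k vec \<Rightarrow> 'k vec)
     \<Rightarrow> 'k pmod \<Rightarrow> (real \<Rightarrow> 'k vec \<Rightarrow> 'k vec) \<Rightarrow> bool" where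
  "is_coker M N f Q q \<longleftrightarrow> is_pmod Q \<and> is_hom N Q q \<and> (\<forall>t. q t ` sp N t = sp Q t)
     \<and> (\<forall>t. {v \<in> sp N t. q t v = vzero} = f t ` sp M t)"

definition is_intv :: "real set \<Rightarrow> bool" where
  "is_intv I \<longleftrightarrow> I \<noteq> {} \<and> (\<forall>x\<in>I. \<forall>z\<in>I. \<forall>y. x \<le> y \<and> y \<le> z \<longrightarrow> y \<in> I)"

definition intsum :: "real set list \<Rightarrow> ('k::field) pmod" where
  "intsum Is = \<lparr>sp = (\<lambda>t. {v. \<forall>i. (i < length Is \<longrightarrow> t \<notin> Is ! i \<longrightarrow> v i = 0)
                                   \<and> (length Is \<le> i \<longrightarrow> v i = 0)}),
                mp = (\<lambda>s t v i. if i < length Is \<and> t \<in> Is ! i then v i else 0)\<rparr>"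

definition ilen :: "real set \<Rightarrow> ereal" where
  "ilen I = (SUP x\<in>I. ereal x) - (INF x\<in>I. ereal x)"

definition topk :: "nat \<Rightarrow> real set list \<Rightarrow> ereal" where
  "topk k Is = sum_list (take k (rev (sort (map ilen Is))))"

definition Tk :: "nat \<Rightarrow> ('k::field) pmod \<Rightarrow> ereal" where
  "Tk k M = (THE x. \<exists>Is. (\<forall>I\<in>set Is. is_intv I) \<and> pmod_iso M (intsum Is) \<and> x = topk k Is)"

text \<open>Zigzags M = C_0 <-g_1- C_1 -g_2-> C_2 <-g_3- ... -g_n-> C_n = N (n even):
  odd-indexed arrows point backwards, even-indexed arrows forwards.\<close>

definition zz_src :: "(nat \<Rightarrow> 'a) \<Rightarrow> nat \<Rightarrow> 'a" where
  "zz_src C i = (if odd i then C i else C (i - 1))"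
definition zz_tgt :: "(nat \<Rightarrow> 'a) \<Rightarrow> nat \<Rightarrow> 'a" where
  "zz_tgt C i = (if odd i then C (i - 1) else C i)"

definition dpath :: "(('k::field) pmod \<Rightarrow> ereal) \<Rightarrow> 'k pmod \<Rightarrow> 'k pmod \<Rightarrow> ereal" where
  "dpath \<alpha> M N = Inf {x. \<exists>n C g Q q. even n \<and> C 0 = M \<and> C n = N
       \<and> (\<forall>i\<le>n. fin_enc (C i))
       \<and> (\<forall>i\<in>{1..n}. is_hom (zz_src C i) (zz_tgt C i) (g i)
             \<and> is_coker (zz_src C i) (zz_tgt C i) (g i) (Q i) (q i))
       \<and> x = (\<Sum>i=1..n. \<alpha> (kerm (zz_src C i) (g i)) + \<alpha> (Q i))}"

end

theory Submission
  imports Defs "HOL-Library.Function_Algebras" "HOL-Library.Multiset" "HOL-Analysis.Extended_Real_Limits"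
begin

(* Both path metrics are infima over the same zigzags, and every kernel and cokernel in such a
   zigzag is again finitely encoded (over the common refinement of the encodings of source and
   target). So it suffices to show T_l X <= max 1 (l/k) * T_k X for finitely encoded X.
   Such an X is a finite direct sum of interval modules: an interval summand is split off by
   following a vector born in the first nonzero fibre until it dies, and one inducts on the total
   dimension over the encoding. The barcode is unique, because the number of bars containing
   s <= t is the rank of X s -> X t, so T_k X is the sum of the k longest bar lengths. The
   inequality is then the fact that the mean of the l largest terms of a decreasing sequence is at
   most the mean of its k largest terms when k <= l. *)

lemma vzero_eq_0: "vzero = 0"
  by (simp add: vzero_def fun_eq_iff)

lemma vadd_eq_plus: "vadd u v = u + v"
  by (simp add: vadd_def fun_eq_iff)

interpretation VS: vector_space "vscale :: 'k::field \<Rightarrow> 'k Defs.vec \<Rightarrow> 'k Defs.vec"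
  by unfold_locales (auto simp: vscale_def fun_eq_iff algebra_simps)

interpretation VP: vector_space_pair
    "vscale :: 'k::field \<Rightarrow> 'k Defs.vec \<Rightarrow> 'k Defs.vec" "vscale :: 'k::field \<Rightarrow> 'k Defs.vec \<Rightarrow> 'k Defs.vec"
  by unfold_locales

lemma vsubspace_iff_subspace: "vsubspace S \<longleftrightarrow> VS.subspace S"
  by (simp add: vsubspace_def VS.subspace_def vzero_eq_0 vadd_eq_plus)

lemma sum_fun_apply: "(\<Sum>b\<in>B. f b) i = (\<Sum>b\<in>B. f b i)" for f :: "'b \<Rightarrow> 'a \<Rightarrow> 'c::comm_monoid_add"
  by (induction B rule: infinite_finite_induct) auto

lemma vspan_eq_span: "vspan A = VS.span A"
proof -
  have "vspan A = {v. \<exists>B c. finite B \<and> B \<subseteq> A \<and> v = (\<Sum>b\<in>B. vscale (c b) b)}"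
    unfolding vspan_def by (simp add: fun_eq_iff sum_fun_apply vscale_def)
  also have "\<dots> = VS.span A"
    unfolding VS.span_explicit by auto
  finally show ?thesis .
qed

lemma fin_dim_iff_span: "fin_dim S \<longleftrightarrow> (\<exists>B. finite B \<and> B \<subseteq> S \<and> S = VS.span B)"
  by (simp add: fin_dim_def vspan_eq_span)

lemma lin_on_iff:
  "lin_on S T f \<longleftrightarrow> (\<forall>v\<in>S. f v \<in> T) \<and> (\<forall>u\<in>S. \<forall>v\<in>S. f (u + v) = f u + f v)
      \<and> (\<forall>c. \<forall>v\<in>S. f (vscale c v) = vscale c (f v))"
  by (auto simp: lin_on_def vadd_eq_plus)

lemma lin_onD:
  assumes "lin_on S T f"
  shows "\<And>v. v \<in> S \<Longrightarrow> f v \<in> T"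
    and "\<And>u v. u \<in> S \<Longrightarrow> v \<in> S \<Longrightarrow> f (u + v) = f u + f v"
    and "\<And>c v. v \<in> S \<Longrightarrow> f (vscale c v) = vscale c (f v)"
  using assms by (auto simp: lin_on_iff)

lemma lin_on_subset:
  assumes "lin_on S T f" "S' \<subseteq> S" "f ` S' \<subseteq> T'"
  shows "lin_on S' T' f"
  using assms unfolding lin_on_def by blast

lemma lin_on_0:
  assumes "lin_on S T f" "VS.subspace S"
  shows "f 0 = 0"
  using lin_onD(3)[OF assms(1) VS.subspace_0[OF assms(2)], of 0] by simp

lemma lin_on_diff:
  assumes f: "lin_on S T f" and S: "VS.subspace S" and "u \<in> S" "v \<in> S"
  shows "f (u - v) = f u - f v"
proof -
  have "f (u - v) + f v = f u"
    using lin_onD(2)[OF f VS.subspace_diff[OF S assms(3,4)] assms(4)] by simp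
  then show ?thesis
    by (simp add: algebra_simps)
qed

lemma lin_on_extends_to_linear:
  assumes f: "lin_on S T f" and S: "VS.subspace S"
  obtains g where "Vector_Spaces.linear vscale vscale g" "\<And>x. x \<in> S \<Longrightarrow> g x = f x"
proof -
  obtain B where B: "B \<subseteq> S" "VS.independent B" "S \<subseteq> VS.span B"
    using VS.maximal_independent_subset[of S] by blast
  have SB: "VS.span B = S"
    using B S by (meson VS.span_subspace)
  let ?g = "VP.construct B f"
  have lin: "Vector_Spaces.linear vscale vscale ?g"
    using VP.linear_construct[OF B(2)] .
  have "x \<in> S \<and> ?g x = f x" if "x \<in> VS.span B" for x
    using that
  proof (induction rule: VS.span_induct_alt)
    case base
    show ?case
      using lin_on_0[OF f S] VP.linear_0[OF lin] VS.subspace_0[OF S] by metis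
  next
    case (step c x y)
    have x: "x \<in> S" and y: "y \<in> S"
      using step B by auto
    have "?g (vscale c x + y) = vscale c (f x) + f y"
      using VP.linear_add[OF lin] VP.linear_scale[OF lin] step VP.construct_basis[OF B(2)] by simp
    also have "\<dots> = f (vscale c x + y)"
      using lin_onD[OF f] x y VS.subspace_scale[OF S x] by simp
    finally show ?case
      using VS.subspace_add[OF S VS.subspace_scale[OF S x] y] by (simp add: plus_fun_def)
  qed
  then show ?thesis
    using that lin SB by auto
qed

lemma lin_on_the_inv_into:
  assumes f: "lin_on S T f" "bij_betw f S T" and S: "VS.subspace S"
  shows "lin_on T S (the_inv_into S f)"
proof -
  have inj: "inj_on f S"
    using f(2) by (simp add: bij_betw_def)
  have inv_in: "the_inv_into S f y \<in> S" if "y \<in> T" for y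
    using f(2) that by (metis bij_betw_the_inv_into bij_betwE)
  have f_inv: "f (the_inv_into S f y) = y" if "y \<in> T" for y
    using f_the_inv_into_f_bij_betw[OF f(2) that] .
  show ?thesis
    unfolding lin_on_iff
  proof (intro conjI ballI allI)
    fix u v assume u: "u \<in> T" and v: "v \<in> T"
    have "f (the_inv_into S f u + the_inv_into S f v) = u + v"
      using lin_onD(2)[OF f(1) inv_in[OF u] inv_in[OF v]] f_inv u v by simp
    then show "the_inv_into S f (u + v) = the_inv_into S f u + the_inv_into S f v"
      using the_inv_into_f_f[OF inj VS.subspace_add[OF S inv_in[OF u] inv_in[OF v]]] by simp
  next
    fix c v assume v: "v \<in> T"
    have "f (vscale c (the_inv_into S f v)) = vscale c v"
      using lin_onD(3)[OF f(1) inv_in[OF v]] f_inv v by simp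
    then show "the_inv_into S f (vscale c v) = vscale c (the_inv_into S f v)"
      using the_inv_into_f_f[OF inj VS.subspace_scale[OF S inv_in[OF v]], of c] by simp
  qed (use inv_in in blast)
qed

lemma subspace_image_lin_on:
  assumes f: "lin_on S T f" and S: "VS.subspace S"
  shows "VS.subspace (f ` S)"
  unfolding VS.subspace_def
proof (intro conjI ballI allI)
  show "0 \<in> f ` S"
    using lin_on_0[OF f S] VS.subspace_0[OF S] by force
next
  fix x y assume "x \<in> f ` S" "y \<in> f ` S"
  then obtain a b where "a \<in> S" "b \<in> S" "x = f a" "y = f b"
    by blast
  then show "x + y \<in> f ` S"
    using lin_onD(2)[OF f] VS.subspace_add[OF S] by (metis image_eqI)
next
  fix c x assume "x \<in> f ` S"
  then obtain a where "a \<in> S" "x = f a"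
    by blast
  then show "vscale c x \<in> f ` S"
    using lin_onD(3)[OF f] VS.subspace_scale[OF S] by (metis image_eqI)
qed

lemma dim_eq_if_lin_on_bij:
  assumes f: "lin_on S T f" "bij_betw f S T" and S: "VS.subspace S" and T: "VS.subspace T"
  shows "VS.dim S = VS.dim T"
proof -
  obtain g where g: "Vector_Spaces.linear vscale vscale g" "\<And>x. x \<in> S \<Longrightarrow> g x = f x"
    using lin_on_extends_to_linear[OF f(1) S] by blast
  obtain B where B: "B \<subseteq> S" "VS.independent B" "S \<subseteq> VS.span B"
    using VS.maximal_independent_subset[of S] by blast
  have SB: "VS.span B = S"
    using B S by (meson VS.span_subspace)
  have inj: "inj_on g S"
    using f(2) g(2) by (simp add: bij_betw_def inj_on_def)
  have gS: "g ` S = T"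
    using g(2) f(2) by (simp add: bij_betw_def cong: image_cong)
  have "VS.independent (g ` B)"
    using VP.linear_independent_injective_image[OF g(1) B(2)] inj SB by simp
  moreover have "VS.span (g ` B) = T"
    using VP.linear_span_image[OF g(1)] SB gS by simp
  ultimately have "VS.dim T = card (g ` B)"
    using VS.dim_eq_card T VS.span_eq_iff by metis
  also have "\<dots> = card B"
    using card_image inj_on_subset[OF inj B(1)] by blast
  also have "\<dots> = VS.dim S"
    using VS.dim_eq_card[of B S] B(2) SB VS.span_eq_iff S by metis
  finally show ?thesis by simp
qed

lemma fin_dim_image_lin_on:
  assumes f: "lin_on S T f" and S: "VS.subspace S" "fin_dim S"
  shows "fin_dim (f ` S)"
proof -
  obtain C where C: "finite C" "C \<subseteq> S" "S = VS.span C"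
    using S(2) unfolding fin_dim_iff_span by blast
  obtain g where g: "Vector_Spaces.linear vscale vscale g" "\<And>x. x \<in> S \<Longrightarrow> g x = f x"
    using lin_on_extends_to_linear[OF f S(1)] by blast
  have gC: "g ` C = f ` C"
    using g(2) C(2) by (auto simp: subset_iff)
  have "f ` S = g ` VS.span C"
    using g(2) C(3) by (simp cong: image_cong)
  also have "\<dots> = VS.span (f ` C)"
    using VP.linear_span_image[OF g(1), of C] gC by simp
  finally show ?thesis
    unfolding fin_dim_iff_span using C by blast
qed

lemma fin_dim_subspace:
  assumes S: "VS.subspace S" and "S \<subseteq> T" "fin_dim T"
  shows "fin_dim S"
proof -
  obtain C where C: "finite C" "T = VS.span C"
    using assms(3) fin_dim_iff_span by blast
  obtain B where B: "B \<subseteq> S" "VS.independent B" "S \<subseteq> VS.span B"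
    using VS.maximal_independent_subset[of S] by blast
  have "finite B"
    using VS.independent_span_bound[OF C(1) B(2)] B(1) assms(2) C(2) by blast
  moreover have "VS.span B = S"
    using B S by (meson VS.span_subspace)
  ultimately show ?thesis
    using B(1) fin_dim_iff_span by blast
qed

lemma dim_psubset:
  assumes S: "VS.subspace S" and T: "VS.subspace T" "fin_dim T" and "S \<subset> T"
  shows "VS.dim S < VS.dim T"
proof -
  obtain C where C: "finite C" "T = VS.span C"
    using T(2) fin_dim_iff_span by blast
  obtain A where A: "A \<subseteq> S" "VS.independent A" "S \<subseteq> VS.span A"
    using VS.maximal_independent_subset[of S] by blast
  obtain B where B: "A \<subseteq> B" "B \<subseteq> T" "VS.independent B" "T \<subseteq> VS.span B"
    using VS.maximal_independent_subset_extend[of A T] A assms(4) by blast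
  have "finite B"
    using VS.independent_span_bound[OF C(1) B(3)] B(2) C(2) by blast
  moreover have SA: "VS.span A = S" and TB: "VS.span B = T"
    using A B S T(1) by (meson VS.span_subspace)+
  ultimately have "card A < card B"
    using B(1) assms(4) by (metis psubset_card_mono psubset_eq)
  moreover have "VS.dim S = card A" "VS.dim T = card B"
    using VS.dim_eq_card A(2) B(3) SA TB VS.span_eq_iff S T(1) by metis+
  ultimately show ?thesis by simp
qed

lemma dim_subset:
  assumes "VS.subspace S" "VS.subspace T" "fin_dim T" "S \<subseteq> T"
  shows "VS.dim S \<le> VS.dim T"
  using dim_psubset[OF assms(1-3)] assms(4) by (cases "S = T") (auto simp: psubset_eq)

definition coord :: "nat set \<Rightarrow> 'k::field Defs.vec set" where
  "coord A = {v. \<forall>i. i \<notin> A \<longrightarrow> v i = 0}"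

definition unit_vec :: "nat \<Rightarrow> 'k::field Defs.vec" where
  "unit_vec i = (\<lambda>j. if j = i then 1 else 0)"

lemma subspace_coord: "VS.subspace (coord A)"
  by (auto simp: VS.subspace_def coord_def vscale_def)

lemma sum_unit_vec: "finite A \<Longrightarrow> (\<Sum>b\<in>A. vscale (c b) (unit_vec b)) = (\<lambda>j. if j \<in> A then c j else 0)"
  by (auto simp: fun_eq_iff sum_fun_apply vscale_def unit_vec_def if_distrib cong: if_cong)

lemma dim_coord:
  assumes A: "finite A"
  shows "VS.dim (coord A :: 'k::field Defs.vec set) = card A"
proof -
  let ?B = "unit_vec ` A :: 'k Defs.vec set"
  have inj: "inj unit_vec"
    unfolding inj_def unit_vec_def fun_eq_iff by (metis zero_neq_one)
  have ind: "VS.independent ?B"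
  proof (rule VS.independent_if_scalars_zero)
    fix f x assume sum0: "(\<Sum>x\<in>?B. vscale (f x) x) = 0" and x: "x \<in> ?B"
    then obtain a where a: "a \<in> A" "x = unit_vec a" by blast
    have "(\<Sum>x\<in>?B. vscale (f x) x) = (\<Sum>b\<in>A. vscale (f (unit_vec b)) (unit_vec b))"
      by (simp add: sum.reindex[OF inj_on_subset[OF inj subset_UNIV]])
    then show "f x = 0"
      using fun_cong[OF sum0, of a] a A by (simp add: sum_unit_vec)
  qed (use A in simp)
  have span: "VS.span ?B = coord A"
  proof
    show "VS.span ?B \<subseteq> coord A"
      by (rule VS.span_minimal[OF _ subspace_coord]) (auto simp: coord_def unit_vec_def)
    show "coord A \<subseteq> VS.span ?B"
    proof
      fix v :: "'k Defs.vec" assume "v \<in> coord A"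
      then have "v = (\<Sum>b\<in>A. vscale (v b) (unit_vec b))"
        using A by (auto simp: sum_unit_vec coord_def fun_eq_iff)
      also have "\<dots> \<in> VS.span ?B"
        by (intro VS.span_sum VS.span_scale VS.span_base) auto
      finally show "v \<in> VS.span ?B" .
    qed
  qed
  have "VS.dim (coord A :: 'k Defs.vec set) = card ?B"
    using VS.dim_eq_card[of ?B "coord A"] ind span subspace_coord VS.span_eq_iff by metis
  also have "\<dots> = card A"
    by (rule card_image[OF inj_on_subset[OF inj subset_UNIV]])
  finally show ?thesis .
qed

definition lin_functional :: "'k::field Defs.vec set \<Rightarrow> ('k Defs.vec \<Rightarrow> 'k) \<Rightarrow> bool" where
  "lin_functional S \<phi> \<longleftrightarrow>
     (\<forall>u\<in>S. \<forall>v\<in>S. \<phi> (u + v) = \<phi> u + \<phi> v) \<and> (\<forall>c. \<forall>v\<in>S. \<phi> (vscale c v) = c * \<phi> v)"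

lemma lin_functional_add: "lin_functional S \<phi> \<Longrightarrow> u \<in> S \<Longrightarrow> v \<in> S \<Longrightarrow> \<phi> (u + v) = \<phi> u + \<phi> v"
  by (simp add: lin_functional_def)

lemma lin_functional_scale: "lin_functional S \<phi> \<Longrightarrow> v \<in> S \<Longrightarrow> \<phi> (vscale c v) = c * \<phi> v"
  by (simp add: lin_functional_def)

lemma lin_functional_0: "lin_functional S \<phi> \<Longrightarrow> VS.subspace S \<Longrightarrow> \<phi> 0 = 0"
  using lin_functional_scale[of S \<phi> 0 0] VS.subspace_0[of S] by simp

lemma lin_functional_diff:
  assumes \<phi>: "lin_functional S \<phi>" and S: "VS.subspace S" and "u \<in> S" "v \<in> S"
  shows "\<phi> (u - v) = \<phi> u - \<phi> v"
proof -
  have "\<phi> (u - v) + \<phi> v = \<phi> u"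
    using lin_functional_add[OF \<phi> VS.subspace_diff[OF S assms(3,4)] assms(4)] by simp
  then show ?thesis
    by (simp add: algebra_simps)
qed

lemma lin_functional_zero: "lin_functional S (\<lambda>v. 0)"
  by (simp add: lin_functional_def)

lemma lin_functional_comp:
  assumes "lin_on S T g" "lin_functional T \<phi>"
  shows "lin_functional S (\<lambda>x. \<phi> (g x))"
  using lin_onD[OF assms(1)] assms(2) by (simp add: lin_functional_def)

lemma lin_functional_eq_1_exists:
  assumes "e \<in> S" "e \<noteq> 0"
  obtains \<phi> where "lin_functional S \<phi>" "\<phi> e = 1"
proof -
  obtain B where B: "e \<in> B" "B \<subseteq> S" "VS.independent B" "S \<subseteq> VS.span B"
    using VS.maximal_independent_subset_extend[of "{e}" S] assms by auto
  have "lin_functional S (\<lambda>x. VS.representation B x e)"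
    using VS.representation_add[OF B(3)] VS.representation_scale[OF B(3)] B(4)
    by (auto simp: lin_functional_def subset_iff)
  moreover have "VS.representation B e e = 1"
    using VS.representation_basis[OF B(3)] B(1) by simp
  ultimately show ?thesis
    using that by blast
qed

lemma is_pmod_subspace: "is_pmod X \<Longrightarrow> VS.subspace (sp X t)"
  by (simp add: is_pmod_def vsubspace_iff_subspace)

lemma is_pmod_lin_on: "is_pmod X \<Longrightarrow> s \<le> t \<Longrightarrow> lin_on (sp X s) (sp X t) (mp X s t)"
  by (simp add: is_pmod_def)

lemma is_pmod_id: "is_pmod X \<Longrightarrow> v \<in> sp X t \<Longrightarrow> mp X t t v = v"
  by (simp add: is_pmod_def)

lemma is_pmod_comp:
  "is_pmod X \<Longrightarrow> r \<le> s \<Longrightarrow> s \<le> t \<Longrightarrow> v \<in> sp X r \<Longrightarrow> mp X s t (mp X r s v) = mp X r t v"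
  by (simp add: is_pmod_def)

lemma is_pmod_mp_in: "is_pmod X \<Longrightarrow> s \<le> t \<Longrightarrow> v \<in> sp X s \<Longrightarrow> mp X s t v \<in> sp X t"
  using lin_onD(1)[OF is_pmod_lin_on] .

lemma is_pmod_mp_0: "is_pmod X \<Longrightarrow> s \<le> t \<Longrightarrow> mp X s t 0 = 0"
  using lin_on_0[OF is_pmod_lin_on is_pmod_subspace] .

lemma is_hom_lin_on: "is_hom X Y f \<Longrightarrow> lin_on (sp X t) (sp Y t) (f t)"
  by (simp add: is_hom_def)

lemma is_hom_commute:
  "is_hom X Y f \<Longrightarrow> s \<le> t \<Longrightarrow> v \<in> sp X s \<Longrightarrow> f t (mp X s t v) = mp Y s t (f s v)"
  by (simp add: is_hom_def)

lemma is_hom_0: "is_hom X Y f \<Longrightarrow> is_pmod X \<Longrightarrow> f t 0 = 0"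
  using lin_on_0[OF is_hom_lin_on is_pmod_subspace] .

lemma sp_intsum: "sp (intsum Is) t = coord {i. i < length Is \<and> t \<in> Is ! i}"
  unfolding intsum_def coord_def by (simp, rule Collect_cong) (meson not_le)

lemma mp_intsum: "mp (intsum Is) s t v = (\<lambda>i. if i < length Is \<and> t \<in> Is ! i then v i else 0)"
  by (simp add: intsum_def)

lemma image_mp_intsum:
  "mp (intsum Is) s t ` sp (intsum Is) s = coord {i. i < length Is \<and> s \<in> Is ! i \<and> t \<in> Is ! i}"
  (is "?L = ?R")
proof
  show "?L \<subseteq> ?R"
    by (auto simp: sp_intsum mp_intsum coord_def)
  show "?R \<subseteq> ?L"
  proof
    fix v assume v: "v \<in> ?R"
    then have "v \<in> sp (intsum Is) s" and "mp (intsum Is) s t v = v"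
      by (auto simp: sp_intsum mp_intsum coord_def fun_eq_iff)
    then show "v \<in> ?L"
      by (metis image_eqI)
  qed
qed

section \<open>Finite encodings of kernels and cokernels\<close>

definition encoding :: "'k::field pmod \<Rightarrow> (real \<Rightarrow> nat) \<Rightarrow> bool" where
  "encoding X \<pi> \<longleftrightarrow> mono \<pi> \<and> finite (range \<pi>)
     \<and> (\<forall>s t. s \<le> t \<and> \<pi> s = \<pi> t \<longrightarrow> bij_betw (mp X s t) (sp X s) (sp X t))"

lemma fin_enc_iff_encoding:
  "fin_enc X \<longleftrightarrow> is_pmod X \<and> (\<forall>t. fin_dim (sp X t)) \<and> (\<exists>\<pi>. encoding X \<pi>)"
  by (simp add: fin_enc_def encoding_def)

lemma encoding_bij: "encoding X \<pi> \<Longrightarrow> s \<le> t \<Longrightarrow> \<pi> s = \<pi> t \<Longrightarrow> bij_betw (mp X s t) (sp X s) (sp X t)"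
  by (simp add: encoding_def)

lemma encoding_mono: "encoding X \<pi> \<Longrightarrow> s \<le> t \<Longrightarrow> \<pi> s \<le> \<pi> t"
  by (simp add: encoding_def mono_def)

text \<open>Two finite encodings have the common refinement \<open>\<lambda>t. \<pi>\<^sub>1 t + \<pi>\<^sub>2 t\<close>: its fibres lie
  in fibres of both, because both summands are monotone.\<close>

lemma fin_enc_if_bij_inherited:
  assumes X: "is_pmod X" "\<And>t. fin_dim (sp X t)" and A: "fin_enc A" and B: "fin_enc B"
    and inherit: "\<And>s t. s \<le> t \<Longrightarrow> bij_betw (mp A s t) (sp A s) (sp A t)
        \<Longrightarrow> bij_betw (mp B s t) (sp B s) (sp B t) \<Longrightarrow> bij_betw (mp X s t) (sp X s) (sp X t)"
  shows "fin_enc X"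
proof -
  obtain \<pi>\<^sub>1 \<pi>\<^sub>2 where \<pi>\<^sub>1: "encoding A \<pi>\<^sub>1" and \<pi>\<^sub>2: "encoding B \<pi>\<^sub>2"
    using A B by (auto simp: fin_enc_iff_encoding)
  let ?\<pi> = "\<lambda>t. \<pi>\<^sub>1 t + \<pi>\<^sub>2 t"
  have "mono ?\<pi>"
    using encoding_mono[OF \<pi>\<^sub>1] encoding_mono[OF \<pi>\<^sub>2] by (simp add: add_mono monoI)
  moreover have "finite (range ?\<pi>)"
  proof (rule finite_subset)
    show "range ?\<pi> \<subseteq> (\<lambda>(a, b). a + b) ` (range \<pi>\<^sub>1 \<times> range \<pi>\<^sub>2)"
      by auto
    show "finite ((\<lambda>(a, b). a + b) ` (range \<pi>\<^sub>1 \<times> range \<pi>\<^sub>2))"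
      using \<pi>\<^sub>1 \<pi>\<^sub>2 by (simp add: encoding_def)
  qed
  moreover have "bij_betw (mp X s t) (sp X s) (sp X t)" if "s \<le> t" "?\<pi> s = ?\<pi> t" for s t
  proof -
    have "\<pi>\<^sub>1 s \<le> \<pi>\<^sub>1 t" "\<pi>\<^sub>2 s \<le> \<pi>\<^sub>2 t"
      using encoding_mono[OF \<pi>\<^sub>1 that(1)] encoding_mono[OF \<pi>\<^sub>2 that(1)] .
    then have "\<pi>\<^sub>1 s = \<pi>\<^sub>1 t" "\<pi>\<^sub>2 s = \<pi>\<^sub>2 t"
      using that(2) by linarith+
    then show ?thesis
      using inherit[OF that(1) encoding_bij[OF \<pi>\<^sub>1 that(1)] encoding_bij[OF \<pi>\<^sub>2 that(1)]] by simp
  qed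
  ultimately have "encoding X ?\<pi>"
    by (simp add: encoding_def)
  then show ?thesis
    using X by (auto simp: fin_enc_iff_encoding)
qed

lemma sp_kerm: "sp (kerm A g) t = {v \<in> sp A t. g t v = 0}"
  by (simp add: kerm_def vzero_eq_0)

lemma mp_kerm: "mp (kerm A g) = mp A"
  by (simp add: kerm_def)

lemma is_pmod_kerm:
  assumes A: "is_pmod A" and B: "is_pmod B" and g: "is_hom A B g"
  shows "is_pmod (kerm A g)"
  unfolding is_pmod_def vsubspace_iff_subspace
proof (intro conjI allI impI ballI)
  show "VS.subspace (sp (kerm A g) t)" for t
    unfolding sp_kerm VS.subspace_def
    using VS.subspace_0[OF is_pmod_subspace[OF A]] VS.subspace_add[OF is_pmod_subspace[OF A]]
      VS.subspace_scale[OF is_pmod_subspace[OF A]] is_hom_0[OF g A] lin_onD[OF is_hom_lin_on[OF g]]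
    by (auto simp: vscale_def)
  fix s t :: real assume st: "s \<le> t"
  have "mp A s t v \<in> sp (kerm A g) t" if v: "v \<in> sp (kerm A g) s" for v
  proof -
    have "g t (mp A s t v) = mp B s t 0"
      using is_hom_commute[OF g st] v by (simp add: sp_kerm)
    then show ?thesis
      using is_pmod_mp_0[OF B st] is_pmod_mp_in[OF A st] v by (simp add: sp_kerm)
  qed
  then show "lin_on (sp (kerm A g) s) (sp (kerm A g) t) (mp (kerm A g) s t)"
    using is_pmod_lin_on[OF A st] unfolding lin_on_def mp_kerm sp_kerm by blast
next
  fix t v assume "v \<in> sp (kerm A g) t"
  then show "mp (kerm A g) t t v = v"
    using is_pmod_id[OF A] by (simp add: sp_kerm mp_kerm)
next
  fix r s t v assume "r \<le> s" "s \<le> t" "v \<in> sp (kerm A g) r"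
  then show "mp (kerm A g) s t (mp (kerm A g) r s v) = mp (kerm A g) r t v"
    using is_pmod_comp[OF A] by (simp add: sp_kerm mp_kerm)
qed

lemma bij_mp_kerm:
  assumes B: "is_pmod B" and g: "is_hom A B g" and st: "s \<le> t"
    and bA: "bij_betw (mp A s t) (sp A s) (sp A t)" and bB: "bij_betw (mp B s t) (sp B s) (sp B t)"
  shows "bij_betw (mp (kerm A g) s t) (sp (kerm A g) s) (sp (kerm A g) t)"
  unfolding bij_betw_def mp_kerm
proof
  show "inj_on (mp A s t) (sp (kerm A g) s)"
    using bA by (auto simp: bij_betw_def sp_kerm intro: inj_on_subset)
  show "mp A s t ` sp (kerm A g) s = sp (kerm A g) t"
  proof (intro equalityI subsetI)
    fix y assume "y \<in> mp A s t ` sp (kerm A g) s"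
    then obtain x where x: "x \<in> sp A s" "g s x = 0" "y = mp A s t x"
      by (auto simp: sp_kerm)
    then show "y \<in> sp (kerm A g) t"
      using is_hom_commute[OF g st x(1)] is_pmod_mp_0[OF B st] bA by (auto simp: sp_kerm bij_betw_def)
  next
    fix y assume y: "y \<in> sp (kerm A g) t"
    then obtain x where x: "x \<in> sp A s" "y = mp A s t x"
      using bA by (auto simp: bij_betw_def sp_kerm)
    have "mp B s t (g s x) = mp B s t 0"
      using is_hom_commute[OF g st x(1)] x(2) y is_pmod_mp_0[OF B st] by (simp add: sp_kerm)
    then have "g s x = 0"
      using bB lin_onD(1)[OF is_hom_lin_on[OF g] x(1)] VS.subspace_0[OF is_pmod_subspace[OF B]]
      by (auto simp: bij_betw_def inj_on_def)
    then show "y \<in> mp A s t ` sp (kerm A g) s"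
      using x by (auto simp: sp_kerm)
  qed
qed

lemma fin_enc_kerm:
  assumes A: "fin_enc A" and B: "fin_enc B" and g: "is_hom A B g"
  shows "fin_enc (kerm A g)"
proof (rule fin_enc_if_bij_inherited[OF _ _ A B])
  have A': "is_pmod A" and B': "is_pmod B"
    using A B by (auto simp: fin_enc_def)
  show "is_pmod (kerm A g)"
    by (rule is_pmod_kerm[OF A' B' g])
  show "fin_dim (sp (kerm A g) t)" for t
    using fin_dim_subspace[OF is_pmod_subspace[OF \<open>is_pmod (kerm A g)\<close>]] A
    by (auto simp: fin_enc_def sp_kerm)
  show "bij_betw (mp (kerm A g) s t) (sp (kerm A g) s) (sp (kerm A g) t)"
    if "s \<le> t" "bij_betw (mp A s t) (sp A s) (sp A t)" "bij_betw (mp B s t) (sp B s) (sp B t)" for s t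
    by (rule bij_mp_kerm[OF B' g that])
qed

lemma is_cokerD:
  assumes "is_coker A B g Q q"
  shows "is_pmod Q" "is_hom B Q q" "\<And>t. q t ` sp B t = sp Q t"
    "\<And>t. {v \<in> sp B t. q t v = 0} = g t ` sp A t"
  using assms by (auto simp: is_coker_def vzero_eq_0)

lemma inj_on_mp_coker:
  assumes A: "is_pmod A" and B: "is_pmod B" and g: "is_hom A B g" and Q: "is_coker A B g Q q"
    and st: "s \<le> t" and A_onto: "mp A s t ` sp A s = sp A t" and B_inj: "inj_on (mp B s t) (sp B s)"
  shows "inj_on (mp Q s t) (sp Q s)"
proof (rule inj_onI)
  note Q' = is_cokerD(1)[OF Q] and q = is_cokerD(2)[OF Q]
    and q_onto = is_cokerD(3)[OF Q] and q_ker = is_cokerD(4)[OF Q]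
  have sB: "VS.subspace (sp B s)" and sQ: "VS.subspace (sp Q s)"
    using is_pmod_subspace B Q' by blast+
  fix y\<^sub>1 y\<^sub>2 assume y: "y\<^sub>1 \<in> sp Q s" "y\<^sub>2 \<in> sp Q s" "mp Q s t y\<^sub>1 = mp Q s t y\<^sub>2"
  obtain x\<^sub>1 x\<^sub>2 where x: "x\<^sub>1 \<in> sp B s" "x\<^sub>2 \<in> sp B s" "y\<^sub>1 = q s x\<^sub>1" "y\<^sub>2 = q s x\<^sub>2"
    using y(1,2) q_onto[of s] by blast
  let ?d = "x\<^sub>1 - x\<^sub>2"
  have d: "?d \<in> sp B s"
    using VS.subspace_diff[OF sB x(1,2)] .
  have qd: "q s ?d = y\<^sub>1 - y\<^sub>2"
    using lin_on_diff[OF is_hom_lin_on[OF q] sB x(1,2)] x(3,4) by simp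
  have "q t (mp B s t ?d) = mp Q s t y\<^sub>1 - mp Q s t y\<^sub>2"
    using is_hom_commute[OF q st d] qd lin_on_diff[OF is_pmod_lin_on[OF Q' st] sQ y(1,2)] by simp
  then have "mp B s t ?d \<in> g t ` mp A s t ` sp A s"
    using q_ker[of t] is_pmod_mp_in[OF B st d] y(3) A_onto by auto
  then obtain a where a: "a \<in> sp A s" "mp B s t ?d = g t (mp A s t a)"
    by auto
  then have "mp B s t ?d = mp B s t (g s a)"
    using is_hom_commute[OF g st a(1)] by simp
  then have "?d = g s a"
    using B_inj d lin_onD(1)[OF is_hom_lin_on[OF g] a(1)] by (auto simp: inj_on_def)
  then have "q s ?d = 0"
    using q_ker[of s] a(1) by blast
  then show "y\<^sub>1 = y\<^sub>2"
    using qd by simp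
qed

lemma image_mp_coker:
  assumes Q: "is_coker A B g Q q" and st: "s \<le> t" and B_onto: "mp B s t ` sp B s = sp B t"
  shows "mp Q s t ` sp Q s = sp Q t"
proof (intro equalityI subsetI)
  fix y assume "y \<in> mp Q s t ` sp Q s"
  then show "y \<in> sp Q t"
    using is_pmod_mp_in[OF is_cokerD(1)[OF Q] st] by blast
next
  fix y assume "y \<in> sp Q t"
  then have "y \<in> q t ` mp B s t ` sp B s"
    using is_cokerD(3)[OF Q, of t] B_onto by simp
  then obtain x where x: "x \<in> sp B s" "y = q t (mp B s t x)"
    by auto
  then have "y = mp Q s t (q s x)"
    using is_hom_commute[OF is_cokerD(2)[OF Q] st x(1)] by simp
  then show "y \<in> mp Q s t ` sp Q s"
    using is_cokerD(3)[OF Q, of s] x(1) by blast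
qed

lemma fin_enc_coker:
  assumes A: "fin_enc A" and B: "fin_enc B" and g: "is_hom A B g" and Q: "is_coker A B g Q q"
  shows "fin_enc Q"
proof (rule fin_enc_if_bij_inherited[OF _ _ A B])
  have A': "is_pmod A" and B': "is_pmod B"
    using A B by (auto simp: fin_enc_def)
  show "is_pmod Q"
    by (rule is_cokerD(1)[OF Q])
  show "fin_dim (sp Q t)" for t
    using fin_dim_image_lin_on[OF is_hom_lin_on[OF is_cokerD(2)[OF Q]] is_pmod_subspace[OF B']] B
      is_cokerD(3)[OF Q] by (simp add: fin_enc_def)
  show "bij_betw (mp Q s t) (sp Q s) (sp Q t)"
    if "s \<le> t" "bij_betw (mp A s t) (sp A s) (sp A t)" "bij_betw (mp B s t) (sp B s) (sp B t)" for s t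
    using inj_on_mp_coker[OF A' B' g Q] image_mp_coker[OF Q] that by (simp add: bij_betw_def)
qed

section \<open>Uniqueness of the barcode\<close>

lemma is_intv_side_of_non_member:
  assumes "is_intv I" "x \<notin> I"
  shows "(\<forall>y\<in>I. x < y) \<or> (\<forall>y\<in>I. y < x)"
proof (rule ccontr)
  assume "\<not> ?thesis"
  then obtain y z where "y \<in> I" "z \<in> I" "y \<le> x" "x \<le> z"
    by (meson not_less)
  then show False
    using assms unfolding is_intv_def by blast
qed

text \<open>Take \<open>s\<close> and \<open>t\<close> the extreme points among witnesses of \<open>J \<noteq> I\<close> for the other
  members \<open>I\<close>.\<close>

lemma interval_separating_pair:
  assumes F: "finite F" "\<forall>I\<in>F. is_intv I" and J: "J \<in> F" "\<forall>I\<in>F. J \<subseteq> I \<longrightarrow> I = J"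
  obtains s t where "s \<le> t" "s \<in> J" "t \<in> J" "\<forall>I\<in>F. I \<noteq> J \<longrightarrow> \<not> (s \<in> I \<and> t \<in> I)"
proof -
  have "\<forall>I\<in>F - {J}. \<exists>x. x \<in> J \<and> x \<notin> I"
    using J(2) by blast
  then obtain x where x: "\<forall>I\<in>F - {J}. x I \<in> J \<and> x I \<notin> I"
    by metis
  obtain j where j: "j \<in> J"
    using F(2) J(1) unfolding is_intv_def by blast
  define W where "W = insert j (x ` (F - {J}))"
  have W: "finite W" "W \<noteq> {}" "W \<subseteq> J"
    using F(1) x j unfolding W_def by auto
  have "\<not> (Min W \<in> I \<and> Max W \<in> I)" if I: "I \<in> F" "I \<noteq> J" for I
  proof -
    have xI: "x I \<in> W" "x I \<notin> I"
      using x I unfolding W_def by blast+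
    have "Min W \<le> x I" "x I \<le> Max W"
      using W(1) xI(1) by (rule Min_le, rule Max_ge)
    then show ?thesis
      using is_intv_side_of_non_member[OF _ xI(2)] F(2) I(1) by force
  qed
  moreover have "Min W \<in> J" "Max W \<in> J" "Min W \<le> Max W"
    using Min_in[OF W(1,2)] Max_in[OF W(1,2)] W(3) Min_le[OF W(1) Max_in[OF W(1,2)]] by auto
  ultimately show ?thesis
    using that by blast
qed

text \<open>A maximal interval \<open>J\<close> of either multiset has the same multiplicity in both (count at
  a separating pair); remove it and induct.\<close>

lemma mset_intervals_eq_if_counts_eq:
  assumes "\<forall>I\<in>#A. is_intv I" "\<forall>I\<in>#B. is_intv I"
    and "\<And>s t. s \<le> t \<Longrightarrow>
      size (filter_mset (\<lambda>I. s \<in> I \<and> t \<in> I) A) = size (filter_mset (\<lambda>I. s \<in> I \<and> t \<in> I) B)"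
  shows "A = B"
  using assms
proof (induction "size A + size B" arbitrary: A B rule: less_induct)
  case less
  show ?case
  proof (cases "A + B = {#}")
    case False
    let ?F = "set_mset (A + B)"
    obtain J where J: "J \<in> ?F" "\<forall>I\<in>?F. J \<le> I \<longrightarrow> J = I"
      using finite_has_maximal[of ?F] False by auto
    have "\<forall>I\<in>?F. is_intv I" "\<forall>I\<in>?F. J \<subseteq> I \<longrightarrow> I = J"
      using less.prems(1,2) J(2) by auto
    then obtain s t where st: "s \<le> t" "s \<in> J" "t \<in> J" "\<forall>I\<in>?F. I \<noteq> J \<longrightarrow> \<not> (s \<in> I \<and> t \<in> I)"
      using interval_separating_pair[of ?F J] J(1) by blast
    have "filter_mset (\<lambda>I. s \<in> I \<and> t \<in> I) M = filter_mset (\<lambda>I. I = J) M" if "set_mset M \<subseteq> ?F" for M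
      using that st by (intro filter_mset_cong) auto
    then have "count A J = count B J"
      using less.prems(3)[OF st(1)] by (simp add: filter_eq_replicate_mset)
    then have "J \<in># A" "J \<in># B"
      using J(1) by (metis UnE count_inI not_in_iff set_mset_union)+
    then obtain A' B' where A': "A = add_mset J A'" and B': "B = add_mset J B'"
      by (metis insert_DiffM)
    have "A' = B'"
    proof (rule less.hyps)
      show "size A' + size B' < size A + size B" "\<forall>I\<in>#A'. is_intv I" "\<forall>I\<in>#B'. is_intv I"
        using less.prems(1,2) by (auto simp: A' B')
      fix s' t' :: real assume "s' \<le> t'"
      then show "size (filter_mset (\<lambda>I. s' \<in> I \<and> t' \<in> I) A') = size (filter_mset (\<lambda>I. s' \<in> I \<and> t' \<in> I) B')"
        using less.prems(3)[of s' t'] unfolding A' B' by (simp split: if_splits)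
    qed
    then show ?thesis
      using A' B' by simp
  qed simp
qed

lemma dim_image_mp_eq_if_iso:
  assumes X: "is_pmod X" and f: "is_hom X Y f" "\<And>t. bij_betw (f t) (sp X t) (sp Y t)"
    and st: "s \<le> t" and Y: "VS.subspace (mp Y s t ` sp Y s)"
  shows "VS.dim (mp X s t ` sp X s) = VS.dim (mp Y s t ` sp Y s)"
proof (rule dim_eq_if_lin_on_bij[OF _ _ _ Y])
  let ?A = "mp X s t ` sp X s"
  have A: "?A \<subseteq> sp X t"
    using is_pmod_mp_in[OF X st] by blast
  show "VS.subspace ?A"
    by (rule subspace_image_lin_on[OF is_pmod_lin_on[OF X st] is_pmod_subspace[OF X]])
  have "f t ` ?A = mp Y s t ` f s ` sp X s"
    unfolding image_image by (rule image_cong[OF refl is_hom_commute[OF f(1) st]])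
  also have "\<dots> = mp Y s t ` sp Y s"
    using f(2)[of s] by (simp add: bij_betw_def)
  finally have image: "f t ` ?A = mp Y s t ` sp Y s" .
  show "lin_on ?A (mp Y s t ` sp Y s) (f t)"
    using lin_on_subset[OF is_hom_lin_on[OF f(1)] A] image by blast
  show "bij_betw (f t) ?A (mp Y s t ` sp Y s)"
    using inj_on_subset[OF bij_betw_imp_inj_on[OF f(2)] A] image by (simp add: bij_betw_def)
qed

lemma dim_image_mp_eq_count:
  fixes X :: "'k::field pmod"
  assumes X: "is_pmod X" and iso: "pmod_iso X (intsum Is)" and st: "s \<le> t"
  shows "VS.dim (mp X s t ` sp X s) = size (filter_mset (\<lambda>I. s \<in> I \<and> t \<in> I) (mset Is))"
proof -
  obtain f where f: "is_hom X (intsum Is) f" "\<And>t. bij_betw (f t) (sp X t) (sp (intsum Is) t)"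
    using iso unfolding pmod_iso_def by blast
  have "VS.dim (mp X s t ` sp X s)
      = VS.dim (coord {i. i < length Is \<and> s \<in> Is ! i \<and> t \<in> Is ! i} :: 'k Defs.vec set)"
    using dim_image_mp_eq_if_iso[OF X f st] by (simp add: image_mp_intsum subspace_coord)
  also have "\<dots> = card {i. i < length Is \<and> s \<in> Is ! i \<and> t \<in> Is ! i}"
    by (simp add: dim_coord)
  also have "\<dots> = size (filter_mset (\<lambda>I. s \<in> I \<and> t \<in> I) (mset Is))"
    unfolding mset_filter[symmetric] size_mset length_filter_conv_card ..
  finally show ?thesis .
qed

theorem barcode_unique:
  assumes X: "is_pmod X" and "pmod_iso X (intsum Is)" "pmod_iso X (intsum Js)"
    and "\<forall>I\<in>set Is. is_intv I" "\<forall>I\<in>set Js. is_intv I"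
  shows "mset Is = mset Js"
proof (rule mset_intervals_eq_if_counts_eq)
  show "\<forall>I\<in>#mset Is. is_intv I" "\<forall>I\<in>#mset Js. is_intv I"
    using assms(4,5) by simp_all
  fix s t :: real assume "s \<le> t"
  then show "size (filter_mset (\<lambda>I. s \<in> I \<and> t \<in> I) (mset Is))
      = size (filter_mset (\<lambda>I. s \<in> I \<and> t \<in> I) (mset Js))"
    using dim_image_mp_eq_count[OF X assms(2)] dim_image_mp_eq_count[OF X assms(3)] by metis
qed

lemma topk_mset_cong: "mset Is = mset Js \<Longrightarrow> topk k Is = topk k Js"
  unfolding topk_def by (metis mset_map properties_for_sort mset_sort sorted_sort)

lemma Tk_eq_topk:
  assumes X: "is_pmod X" and Is: "\<forall>I\<in>set Is. is_intv I" "pmod_iso X (intsum Is)"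
  shows "Tk k X = topk k Is"
  unfolding Tk_def
proof (rule the_equality)
  fix x assume "\<exists>Js. (\<forall>I\<in>set Js. is_intv I) \<and> pmod_iso X (intsum Js) \<and> x = topk k Js"
  then show "x = topk k Is"
    using barcode_unique[OF X] Is topk_mset_cong by metis
qed (use Is in blast)

section \<open>Existence of the barcode\<close>

text \<open>Inside a fibre of an encoding all structure maps are invertible, so vectors can also be
  transported backwards in time.\<close>

definition transport :: "'k::field pmod \<Rightarrow> real \<Rightarrow> real \<Rightarrow> 'k Defs.vec \<Rightarrow> 'k Defs.vec" where
  "transport X a b x = (if a \<le> b then mp X a b x else the_inv_into (sp X b) (mp X b a) x)"

lemma transport_le [simp]: "a \<le> b \<Longrightarrow> transport X a b = mp X a b"
  by (simp add: transport_def fun_eq_iff)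

context
  fixes X :: "'k::field pmod" and \<pi> :: "real \<Rightarrow> nat"
  assumes X: "is_pmod X" and \<pi>: "encoding X \<pi>"
begin

lemma mp_transport_inv:
  "b < a \<Longrightarrow> \<pi> a = \<pi> b \<Longrightarrow> x \<in> sp X a \<Longrightarrow> mp X b a (transport X a b x) = x"
  unfolding transport_def using f_the_inv_into_f_bij_betw[OF encoding_bij[OF \<pi>]] by simp

lemma transport_inv_mp:
  "b < a \<Longrightarrow> \<pi> a = \<pi> b \<Longrightarrow> y \<in> sp X b \<Longrightarrow> transport X a b (mp X b a y) = y"
  unfolding transport_def using the_inv_into_f_f[OF bij_betw_imp_inj_on[OF encoding_bij[OF \<pi>]]] by simp

lemma lin_on_transport:
  assumes "a \<le> b \<or> \<pi> a = \<pi> b"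
  shows "lin_on (sp X a) (sp X b) (transport X a b)"
proof (cases "a \<le> b")
  case False
  then have ba: "b \<le> a" "\<pi> b = \<pi> a"
    using assms by auto
  have "transport X a b = the_inv_into (sp X b) (mp X b a)"
    using False by (simp add: transport_def fun_eq_iff)
  then show ?thesis
    using lin_on_the_inv_into[OF is_pmod_lin_on[OF X ba(1)] encoding_bij[OF \<pi> ba] is_pmod_subspace[OF X]]
    by simp
qed (simp add: is_pmod_lin_on[OF X])

lemma transport_in:
  "a \<le> b \<or> \<pi> a = \<pi> b \<Longrightarrow> x \<in> sp X a \<Longrightarrow> transport X a b x \<in> sp X b"
  using lin_onD(1)[OF lin_on_transport] .

lemma mp_transport:
  assumes st: "s \<le> t" and a: "a \<le> s \<or> \<pi> a = \<pi> s" and x: "x \<in> sp X a"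
  shows "mp X s t (transport X a s x) = transport X a t x"
proof (cases "a \<le> s")
  case True
  then show ?thesis
    using st is_pmod_comp[OF X True st x] by simp
next
  case False
  then have sa: "s < a" "\<pi> a = \<pi> s"
    using a by auto
  have y: "transport X a s x \<in> sp X s"
    using transport_in[OF a x] .
  show ?thesis
  proof (cases "a \<le> t")
    case True
    have "mp X s t (transport X a s x) = mp X a t (mp X s a (transport X a s x))"
      using is_pmod_comp[OF X less_imp_le[OF sa(1)] True y] is_pmod_comp[OF X st _ y] by simp
    then show ?thesis
      using True mp_transport_inv[OF sa x] by simp
  next
    case False
    then have ta: "t < a" "\<pi> a = \<pi> t"
      using encoding_mono[OF \<pi> st] encoding_mono[OF \<pi>, of t a] sa by simp_all
    have "mp X t a (mp X s t (transport X a s x)) = x"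
      using is_pmod_comp[OF X st _ y] False mp_transport_inv[OF sa x] by simp
    then show ?thesis
      using transport_inv_mp[OF ta is_pmod_mp_in[OF X st y]] by simp
  qed
qed

lemma transport_trans:
  assumes "a \<le> b \<or> \<pi> a = \<pi> b" "b \<le> c \<or> \<pi> b = \<pi> c" "a \<le> c \<or> \<pi> a = \<pi> c" and x: "x \<in> sp X a"
  shows "transport X b c (transport X a b x) = transport X a c x"
proof (cases "b \<le> c")
  case True
  then show ?thesis
    using mp_transport[OF True assms(1) x] by simp
next
  case False
  then have "c < b" "\<pi> b = \<pi> c"
    using assms(2) by auto
  moreover have "transport X a b x = mp X c b (transport X a c x)"
    using mp_transport[OF less_imp_le[OF \<open>c < b\<close>] assms(3) x] by simp
  ultimately show ?thesis
    using transport_inv_mp transport_in[OF assms(3) x] by simp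
qed

end

definition cons_vec :: "'k \<Rightarrow> 'k Defs.vec \<Rightarrow> 'k Defs.vec" where
  "cons_vec a w = (\<lambda>i. case i of 0 \<Rightarrow> a | Suc j \<Rightarrow> w j)"

lemma cons_vec_eq_iff: "cons_vec a w = cons_vec b u \<longleftrightarrow> a = b \<and> w = u"
  by (auto simp: cons_vec_def fun_eq_iff split: nat.splits)

lemma cons_vec_split: "v = cons_vec (v 0) (\<lambda>j. v (Suc j))"
  by (simp add: cons_vec_def fun_eq_iff split: nat.splits)

lemma cons_vec_add: "cons_vec a w + cons_vec b u = cons_vec (a + b) (w + u)"
  by (simp add: cons_vec_def fun_eq_iff split: nat.splits)

lemma vscale_cons_vec: "vscale c (cons_vec a w) = cons_vec (c * a) (vscale c w)"
  by (simp add: cons_vec_def vscale_def fun_eq_iff split: nat.splits)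

lemma cons_vec_in_intsum_Cons:
  "cons_vec a w \<in> sp (intsum (I # Is)) t \<longleftrightarrow> (t \<notin> I \<longrightarrow> a = 0) \<and> w \<in> sp (intsum Is) t"
  unfolding sp_intsum coord_def cons_vec_def
  by (auto split: nat.splits)

lemma mp_intsum_Cons:
  "mp (intsum (I # Is)) s t (cons_vec a w) = cons_vec (if t \<in> I then a else 0) (mp (intsum Is) s t w)"
  by (simp add: mp_intsum cons_vec_def fun_eq_iff split: nat.splits)

text \<open>The data of a summand \<open>k\<^sub>I\<close> of \<open>X\<close>: a family \<open>e\<close> spanning a copy of \<open>k\<^sub>I\<close> and a
  retraction \<open>r\<close> onto it; then \<open>X \<cong> k\<^sub>I \<oplus> ker r\<close>.\<close>

locale interval_summand =
  fixes X :: "'k::field pmod" and I :: "real set"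
    and r :: "real \<Rightarrow> 'k Defs.vec \<Rightarrow> 'k" and e :: "real \<Rightarrow> 'k Defs.vec"
  assumes pmod: "is_pmod X"
    and lin_functional_r: "\<And>t. lin_functional (sp X t) (r t)"
    and r_outside: "\<And>t v. t \<notin> I \<Longrightarrow> r t v = 0"
    and r_mp: "\<And>s t x. s \<le> t \<Longrightarrow> t \<in> I \<Longrightarrow> x \<in> sp X s \<Longrightarrow> r t (mp X s t x) = r s x"
    and e_in: "\<And>t. t \<in> I \<Longrightarrow> e t \<in> sp X t"
    and e_outside: "\<And>t. t \<notin> I \<Longrightarrow> e t = 0"
    and mp_e: "\<And>s t. s \<le> t \<Longrightarrow> s \<in> I \<Longrightarrow> mp X s t (e s) = e t"
    and r_e: "\<And>t. t \<in> I \<Longrightarrow> r t (e t) = 1"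
begin

definition complement :: "'k pmod" where
  "complement = \<lparr>sp = (\<lambda>t. {v \<in> sp X t. r t v = 0}), mp = mp X\<rparr>"

definition proj :: "real \<Rightarrow> 'k Defs.vec \<Rightarrow> 'k Defs.vec" where
  "proj t x = x - vscale (r t x) (e t)"

lemma sp_complement: "sp complement t = {v \<in> sp X t. r t v = 0}"
  by (simp add: complement_def)

lemma mp_complement: "mp complement = mp X"
  by (simp add: complement_def)

lemma subspace_X: "VS.subspace (sp X t)"
  by (rule is_pmod_subspace[OF pmod])

lemma e_in_sp: "e t \<in> sp X t"
  using e_in e_outside VS.subspace_0[OF subspace_X] by (cases "t \<in> I") auto

lemma r_mp_eq: "s \<le> t \<Longrightarrow> x \<in> sp X s \<Longrightarrow> r t (mp X s t x) = (if t \<in> I then r s x else 0)"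
  using r_mp r_outside by simp

lemma mp_complement_in: "s \<le> t \<Longrightarrow> v \<in> sp complement s \<Longrightarrow> mp X s t v \<in> sp complement t"
  using r_mp_eq is_pmod_mp_in[OF pmod] by (simp add: sp_complement)

lemma subspace_complement: "VS.subspace (sp complement t)"
  unfolding sp_complement VS.subspace_def
  using VS.subspace_0[OF subspace_X] VS.subspace_add[OF subspace_X] VS.subspace_scale[OF subspace_X]
    lin_functional_0[OF lin_functional_r subspace_X] lin_functional_add[OF lin_functional_r]
    lin_functional_scale[OF lin_functional_r]
  by simp

lemma is_pmod_complement: "is_pmod complement"
  unfolding is_pmod_def vsubspace_iff_subspace
proof (intro conjI allI impI ballI)
  show "VS.subspace (sp complement t)" for t
    by (rule subspace_complement)
  fix s t :: real assume st: "s \<le> t"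
  have "sp complement s \<subseteq> sp X s" "mp X s t ` sp complement s \<subseteq> sp complement t"
    using mp_complement_in[OF st] by (auto simp: sp_complement)
  then show "lin_on (sp complement s) (sp complement t) (mp complement s t)"
    unfolding mp_complement by (rule lin_on_subset[OF is_pmod_lin_on[OF pmod st]])
next
  fix t v assume "v \<in> sp complement t"
  then show "mp complement t t v = v"
    using is_pmod_id[OF pmod] by (simp add: sp_complement mp_complement)
next
  fix q s t v assume "q \<le> s" "s \<le> t" "v \<in> sp complement q"
  then show "mp complement s t (mp complement q s v) = mp complement q t v"
    using is_pmod_comp[OF pmod] by (simp add: sp_complement mp_complement)
qed

lemma fin_dim_complement: "fin_dim (sp X t) \<Longrightarrow> fin_dim (sp complement t)"
  using fin_dim_subspace[OF subspace_complement] by (auto simp: sp_complement)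

lemma sp_complement_psubset:
  assumes "t \<in> I"
  shows "sp complement t \<subset> sp X t"
proof -
  have "e t \<in> sp X t - sp complement t"
    using e_in[OF assms] r_e[OF assms] by (simp add: sp_complement)
  then show ?thesis
    by (auto simp: sp_complement)
qed

lemma encoding_complement:
  assumes \<pi>: "encoding X \<pi>" and fibres: "\<And>s t. \<pi> s = \<pi> t \<Longrightarrow> s \<in> I \<longleftrightarrow> t \<in> I"
  shows "encoding complement \<pi>"
  unfolding encoding_def
proof (intro conjI allI impI)
  show "mono \<pi>" "finite (range \<pi>)"
    using \<pi> by (auto simp: encoding_def)
  fix s t assume st: "s \<le> t \<and> \<pi> s = \<pi> t"
  then have bij: "bij_betw (mp X s t) (sp X s) (sp X t)"
    using encoding_bij[OF \<pi>] by blast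
  have "sp complement t \<subseteq> mp X s t ` sp complement s"
  proof
    fix y assume y: "y \<in> sp complement t"
    then obtain x where x: "x \<in> sp X s" "y = mp X s t x"
      using bij by (auto simp: bij_betw_def sp_complement)
    have "r s x = 0"
    proof (cases "t \<in> I")
      case True
      then show ?thesis
        using r_mp[of s t x] st x y by (simp add: sp_complement)
    next
      case False
      then show ?thesis
        using fibres[of s t] st r_outside by simp
    qed
    then show "y \<in> mp X s t ` sp complement s"
      using x by (auto simp: sp_complement)
  qed
  moreover have "mp X s t ` sp complement s \<subseteq> sp complement t"
    using mp_complement_in st by blast
  moreover have "inj_on (mp X s t) (sp complement s)"
    using inj_on_subset[OF bij_betw_imp_inj_on[OF bij]] by (auto simp: sp_complement)
  ultimately show "bij_betw (mp complement s t) (sp complement s) (sp complement t)"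
    by (auto simp: bij_betw_def mp_complement)
qed

lemma proj_in: "x \<in> sp X t \<Longrightarrow> proj t x \<in> sp complement t"
proof (cases "t \<in> I")
  case True
  assume x: "x \<in> sp X t"
  have "proj t x \<in> sp X t"
    unfolding proj_def by (rule VS.subspace_diff[OF subspace_X x VS.subspace_scale[OF subspace_X e_in_sp]])
  moreover have "r t (proj t x) = 0"
    using lin_functional_diff[OF lin_functional_r subspace_X x VS.subspace_scale[OF subspace_X e_in_sp]]
      lin_functional_scale[OF lin_functional_r e_in_sp] r_e[OF True]
    by (simp add: proj_def)
  ultimately show ?thesis
    by (simp add: sp_complement)
qed (simp add: proj_def r_outside e_outside sp_complement)

lemma lin_on_proj: "lin_on (sp X t) (sp complement t) (proj t)"
  unfolding lin_on_iff
proof (intro conjI ballI allI)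
  fix u v assume "u \<in> sp X t" "v \<in> sp X t"
  then have "r t (u + v) = r t u + r t v"
    by (rule lin_functional_add[OF lin_functional_r])
  then show "proj t (u + v) = proj t u + proj t v"
    by (simp add: proj_def VS.scale_left_distrib)
next
  fix c v assume "v \<in> sp X t"
  then have "r t (vscale c v) = c * r t v"
    by (rule lin_functional_scale[OF lin_functional_r])
  then show "proj t (vscale c v) = vscale c (proj t v)"
    by (simp add: proj_def VS.scale_right_diff_distrib)
qed (rule proj_in)

lemma proj_mp:
  assumes st: "s \<le> t" and x: "x \<in> sp X s"
  shows "proj t (mp X s t x) = mp X s t (proj s x)"
proof -
  have "mp X s t (proj s x) = mp X s t x - vscale (r s x) (mp X s t (e s))"
    unfolding proj_def
    using lin_on_diff[OF is_pmod_lin_on[OF pmod st] subspace_X x VS.subspace_scale[OF subspace_X e_in_sp]]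
      lin_onD(3)[OF is_pmod_lin_on[OF pmod st] e_in_sp] by simp
  moreover have "vscale (r s x) (mp X s t (e s)) = vscale (r t (mp X s t x)) (e t)"
    using r_mp_eq[OF st x] mp_e[OF st] e_outside r_outside is_pmod_mp_0[OF pmod st]
    by (cases "s \<in> I"; cases "t \<in> I") auto
  ultimately show ?thesis
    by (simp add: proj_def)
qed

lemma proj_add_e:
  assumes v: "v \<in> sp complement t" and a: "t \<notin> I \<Longrightarrow> a = 0"
  shows "r t (v + vscale a (e t)) = a" "proj t (v + vscale a (e t)) = v"
proof -
  have "v \<in> sp X t" "r t v = 0"
    using v by (auto simp: sp_complement)
  then show r: "r t (v + vscale a (e t)) = a"
    using lin_functional_add[OF lin_functional_r _ VS.subspace_scale[OF subspace_X e_in_sp]]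
      lin_functional_scale[OF lin_functional_r e_in_sp] r_e a r_outside by (cases "t \<in> I") auto
  show "proj t (v + vscale a (e t)) = v"
    unfolding proj_def r by simp
qed

end

context interval_summand
begin

lemma is_hom_split:
  assumes \<psi>: "is_hom complement (intsum Is) \<psi>"
  shows "is_hom X (intsum (I # Is)) (\<lambda>t x. cons_vec (r t x) (\<psi> t (proj t x)))"
  unfolding is_hom_def
proof (intro conjI allI impI)
  fix t
  have \<psi>t: "lin_on (sp complement t) (sp (intsum Is) t) (\<psi> t)"
    by (rule is_hom_lin_on[OF \<psi>])
  show "lin_on (sp X t) (sp (intsum (I # Is)) t) (\<lambda>x. cons_vec (r t x) (\<psi> t (proj t x)))"
    unfolding lin_on_iff
  proof (intro conjI ballI allI)
    fix v assume "v \<in> sp X t"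
    then show "cons_vec (r t v) (\<psi> t (proj t v)) \<in> sp (intsum (I # Is)) t"
      using r_outside lin_onD(1)[OF \<psi>t proj_in] by (simp add: cons_vec_in_intsum_Cons)
  next
    fix u v assume "u \<in> sp X t" "v \<in> sp X t"
    then show "cons_vec (r t (u + v)) (\<psi> t (proj t (u + v)))
        = cons_vec (r t u) (\<psi> t (proj t u)) + cons_vec (r t v) (\<psi> t (proj t v))"
      using lin_functional_add[OF lin_functional_r] lin_onD(2)[OF lin_on_proj] lin_onD(2)[OF \<psi>t]
        proj_in by (simp add: cons_vec_add)
  next
    fix c v assume "v \<in> sp X t"
    then show "cons_vec (r t (vscale c v)) (\<psi> t (proj t (vscale c v)))
        = vscale c (cons_vec (r t v) (\<psi> t (proj t v)))"
      using lin_functional_scale[OF lin_functional_r] lin_onD(3)[OF lin_on_proj] lin_onD(3)[OF \<psi>t]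
        proj_in by (simp add: vscale_cons_vec)
  qed
next
  fix s t x assume st: "s \<le> t" and x: "x \<in> sp X s"
  have "\<psi> t (proj t (mp X s t x)) = mp (intsum Is) s t (\<psi> s (proj s x))"
    using proj_mp[OF st x] is_hom_commute[OF \<psi> st proj_in[OF x]] by (simp add: mp_complement)
  then show "cons_vec (r t (mp X s t x)) (\<psi> t (proj t (mp X s t x)))
      = mp (intsum (I # Is)) s t (cons_vec (r s x) (\<psi> s (proj s x)))"
    using r_mp_eq[OF st x] by (simp add: mp_intsum_Cons)
qed

lemma bij_split:
  assumes \<psi>: "bij_betw \<psi> (sp complement t) (sp (intsum Is) t)"
  shows "bij_betw (\<lambda>x. cons_vec (r t x) (\<psi> (proj t x))) (sp X t) (sp (intsum (I # Is)) t)"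
  unfolding bij_betw_def
proof
  show "inj_on (\<lambda>x. cons_vec (r t x) (\<psi> (proj t x))) (sp X t)"
  proof (rule inj_onI)
    fix u v assume uv: "u \<in> sp X t" "v \<in> sp X t"
      and "cons_vec (r t u) (\<psi> (proj t u)) = cons_vec (r t v) (\<psi> (proj t v))"
    then have "r t u = r t v" "\<psi> (proj t u) = \<psi> (proj t v)"
      by (simp_all add: cons_vec_eq_iff)
    then have "r t u = r t v" "proj t u = proj t v"
      using inj_onD[OF bij_betw_imp_inj_on[OF \<psi>]] proj_in uv by blast+
    then show "u = v"
      by (simp add: proj_def)
  qed
  show "(\<lambda>x. cons_vec (r t x) (\<psi> (proj t x))) ` sp X t = sp (intsum (I # Is)) t"
  proof (intro equalityI subsetI)
    fix w assume "w \<in> (\<lambda>x. cons_vec (r t x) (\<psi> (proj t x))) ` sp X t"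
    then show "w \<in> sp (intsum (I # Is)) t"
      using r_outside proj_in bij_betwE[OF \<psi>] by (auto simp: cons_vec_in_intsum_Cons)
  next
    fix w :: "'k Defs.vec" assume "w \<in> sp (intsum (I # Is)) t"
    then have "cons_vec (w 0) (\<lambda>j. w (Suc j)) \<in> sp (intsum (I # Is)) t"
      by (simp flip: cons_vec_split)
    then have w0: "t \<notin> I \<Longrightarrow> w 0 = 0" and "(\<lambda>j. w (Suc j)) \<in> \<psi> ` sp complement t"
      using \<psi> by (simp_all add: cons_vec_in_intsum_Cons bij_betw_def)
    then obtain v where v: "v \<in> sp complement t" "\<psi> v = (\<lambda>j. w (Suc j))"
      by force
    let ?x = "v + vscale (w 0) (e t)"
    have "v \<in> sp X t"
      using v(1) by (simp add: sp_complement)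
    then have x: "?x \<in> sp X t"
      by (rule VS.subspace_add[OF subspace_X _ VS.subspace_scale[OF subspace_X e_in_sp]])
    have "cons_vec (r t ?x) (\<psi> (proj t ?x)) = cons_vec (w 0) (\<lambda>j. w (Suc j))"
      using proj_add_e[OF v(1) w0] v(2) by simp
    then have "w = cons_vec (r t ?x) (\<psi> (proj t ?x))"
      using cons_vec_split[of w] by simp
    then show "w \<in> (\<lambda>x. cons_vec (r t x) (\<psi> (proj t x))) ` sp X t"
      using x by (rule image_eqI)
  qed
qed

lemma pmod_iso_intsum_Cons:
  assumes "pmod_iso complement (intsum Is)"
  shows "pmod_iso X (intsum (I # Is))"
proof -
  obtain \<psi> where \<psi>: "is_hom complement (intsum Is) \<psi>"
    "\<And>t. bij_betw (\<psi> t) (sp complement t) (sp (intsum Is) t)"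
    using assms unfolding pmod_iso_def by blast
  show ?thesis
    unfolding pmod_iso_def using is_hom_split[OF \<psi>(1)] bij_split[OF \<psi>(2)] by blast
qed

end

lemma mono_le_or_same_fibre:
  fixes \<pi> :: "'a::linorder \<Rightarrow> 'b::order"
  assumes "mono \<pi>" "\<pi> a \<le> \<pi> t"
  shows "a \<le> t \<or> \<pi> a = \<pi> t"
proof (cases "a \<le> t")
  case False
  then have "\<pi> t \<le> \<pi> a"
    using monoD[OF assms(1)] by simp
  then show ?thesis
    using assms(2) by simp
qed simp

lemma is_intv_fibres:
  fixes \<pi> :: "real \<Rightarrow> 'b::order"
  assumes "mono \<pi>" "\<pi> a \<le> \<pi> b"
  shows "is_intv {t. \<pi> a \<le> \<pi> t \<and> \<pi> t \<le> \<pi> b}"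
  unfolding is_intv_def
proof (intro conjI ballI allI impI)
  show "{t. \<pi> a \<le> \<pi> t \<and> \<pi> t \<le> \<pi> b} \<noteq> {}"
    using assms(2) by auto
  fix x y z assume "x \<in> {t. \<pi> a \<le> \<pi> t \<and> \<pi> t \<le> \<pi> b}" "z \<in> {t. \<pi> a \<le> \<pi> t \<and> \<pi> t \<le> \<pi> b}"
    and "x \<le> y \<and> y \<le> z"
  then show "y \<in> {t. \<pi> a \<le> \<pi> t \<and> \<pi> t \<le> \<pi> b}"
    using monoD[OF assms(1), of x y] monoD[OF assms(1), of y z] by auto
qed

context
  fixes X :: "'k::field pmod" and \<pi> :: "real \<Rightarrow> nat"
  assumes X: "is_pmod X" and \<pi>: "encoding X \<pi>"
begin

context
  fixes t\<^sub>0 t\<^sub>1 :: real and v\<^sub>0 :: "'k Defs.vec" and I :: "real set"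
  assumes v\<^sub>0: "v\<^sub>0 \<in> sp X t\<^sub>0" and t\<^sub>0\<^sub>1: "t\<^sub>0 \<le> t\<^sub>1"
    and below: "\<And>s. \<pi> s < \<pi> t\<^sub>0 \<Longrightarrow> sp X s = {0}"
    and above: "\<And>t. t\<^sub>0 \<le> t \<Longrightarrow> \<pi> t\<^sub>1 < \<pi> t \<Longrightarrow> mp X t\<^sub>0 t v\<^sub>0 = 0"
    and I: "I = {t. \<pi> t\<^sub>0 \<le> \<pi> t \<and> \<pi> t \<le> \<pi> t\<^sub>1}"
begin

lemma mem_I_reach:
  assumes "t \<in> I"
  shows "t\<^sub>0 \<le> t \<or> \<pi> t\<^sub>0 = \<pi> t" "t \<le> t\<^sub>1 \<or> \<pi> t = \<pi> t\<^sub>1"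
  using assms mono_le_or_same_fibre[of \<pi>] \<pi> unfolding I by (auto simp: encoding_def)

lemma mp_transport_section:
  assumes st: "s \<le> t" and s: "s \<in> I"
  shows "mp X s t (transport X t\<^sub>0 s v\<^sub>0) = (if t \<in> I then transport X t\<^sub>0 t v\<^sub>0 else 0)"
proof (cases "t \<in> I")
  case True
  then show ?thesis
    using mp_transport[OF X \<pi> st mem_I_reach(1)[OF s] v\<^sub>0] by simp
next
  case False
  then have "\<pi> t\<^sub>1 < \<pi> t"
    using encoding_mono[OF \<pi> st] s unfolding I by auto
  moreover from this have "t\<^sub>0 \<le> t"
    using encoding_mono[OF \<pi>, of t t\<^sub>0] s unfolding I by force
  ultimately show ?thesis
    using mp_transport[OF X \<pi> st mem_I_reach(1)[OF s] v\<^sub>0] above False by simp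
qed

lemma transport_retraction_mp:
  assumes \<phi>: "lin_functional (sp X t\<^sub>1) \<phi>" and st: "s \<le> t" and t: "t \<in> I" and x: "x \<in> sp X s"
  shows "\<phi> (transport X t t\<^sub>1 (mp X s t x)) = (if s \<in> I then \<phi> (transport X s t\<^sub>1 x) else 0)"
proof (cases "s \<in> I")
  case True
  then show ?thesis
    using transport_trans[OF X \<pi> _ mem_I_reach(2)[OF t] mem_I_reach(2)[OF True] x] st by simp
next
  case False
  then have "\<pi> s < \<pi> t\<^sub>0"
    using encoding_mono[OF \<pi> st] t unfolding I by auto
  then have "x = 0"
    using below x by blast
  then show ?thesis
    using False is_pmod_mp_0[OF X st] lin_on_0[OF lin_on_transport[OF X \<pi> mem_I_reach(2)[OF t]]]
      lin_functional_0[OF \<phi>] is_pmod_subspace[OF X] by simp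
qed

lemma interval_summand_from_vector:
  assumes \<phi>: "lin_functional (sp X t\<^sub>1) \<phi>" "\<phi> (mp X t\<^sub>0 t\<^sub>1 v\<^sub>0) = 1"
  shows "interval_summand X I (\<lambda>t x. if t \<in> I then \<phi> (transport X t t\<^sub>1 x) else 0)
      (\<lambda>t. if t \<in> I then transport X t\<^sub>0 t v\<^sub>0 else 0)"
proof
  show "is_pmod X"
    by (rule X)
  show "lin_functional (sp X t) (\<lambda>x. if t \<in> I then \<phi> (transport X t t\<^sub>1 x) else 0)" for t
    using lin_functional_comp[OF lin_on_transport[OF X \<pi> mem_I_reach(2)] \<phi>(1)] lin_functional_zero
    by (cases "t \<in> I") simp_all
  show "(if t \<in> I then transport X t\<^sub>0 t v\<^sub>0 else 0) \<in> sp X t" if "t \<in> I" for t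
    using transport_in[OF X \<pi> mem_I_reach(1)[OF that] v\<^sub>0] that by simp
  show "(if t \<in> I then \<phi> (transport X t t\<^sub>1 (if t \<in> I then transport X t\<^sub>0 t v\<^sub>0 else 0)) else 0) = 1"
    if t: "t \<in> I" for t
    using transport_trans[OF X \<pi> mem_I_reach[OF t] _ v\<^sub>0] t\<^sub>0\<^sub>1 t \<phi>(2) by simp
qed (use transport_retraction_mp[OF \<phi>(1)] mp_transport_section in simp_all)

end

lemma interval_summand_exists:
  assumes "\<exists>t. sp X t \<noteq> {0}"
  obtains I r e where "interval_summand X I r e" "is_intv I" "\<And>s t. \<pi> s = \<pi> t \<Longrightarrow> s \<in> I \<longleftrightarrow> t \<in> I"
proof -
  obtain t\<^sub>0 where t\<^sub>0: "sp X t\<^sub>0 \<noteq> {0}" "\<And>s. sp X s \<noteq> {0} \<Longrightarrow> \<pi> t\<^sub>0 \<le> \<pi> s"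
    using ex_has_least_nat[of "\<lambda>t. sp X t \<noteq> {0}" _ \<pi>] assms by blast
  then have below: "sp X s = {0}" if "\<pi> s < \<pi> t\<^sub>0" for s
    using that not_le by blast
  obtain v\<^sub>0 where v\<^sub>0: "v\<^sub>0 \<in> sp X t\<^sub>0" "v\<^sub>0 \<noteq> 0"
    using t\<^sub>0(1) VS.subspace_0[OF is_pmod_subspace[OF X]] by blast
  let ?alive = "\<lambda>t. t\<^sub>0 \<le> t \<and> mp X t\<^sub>0 t v\<^sub>0 \<noteq> 0"
  have "\<pi> t < Suc (Max (range \<pi>))" for t
    using \<pi> by (simp add: encoding_def le_imp_less_Suc)
  moreover have "?alive t\<^sub>0"
    using is_pmod_id[OF X v\<^sub>0(1)] v\<^sub>0(2) by simp
  ultimately obtain t\<^sub>1 where t\<^sub>1: "?alive t\<^sub>1" "\<And>t. ?alive t \<Longrightarrow> \<pi> t \<le> \<pi> t\<^sub>1"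
    using Lattices_Big.ex_has_greatest_nat[of ?alive t\<^sub>0 \<pi>] by blast
  then have above: "mp X t\<^sub>0 t v\<^sub>0 = 0" if "t\<^sub>0 \<le> t" "\<pi> t\<^sub>1 < \<pi> t" for t
    using that not_le by blast
  obtain \<phi> where \<phi>: "lin_functional (sp X t\<^sub>1) \<phi>" "\<phi> (mp X t\<^sub>0 t\<^sub>1 v\<^sub>0) = 1"
    using lin_functional_eq_1_exists[OF is_pmod_mp_in[OF X _ v\<^sub>0(1)]] t\<^sub>1(1) by blast
  define I where "I = {t. \<pi> t\<^sub>0 \<le> \<pi> t \<and> \<pi> t \<le> \<pi> t\<^sub>1}"
  have "is_intv I"
    unfolding I_def using \<pi> encoding_mono[OF \<pi>] t\<^sub>1(1) by (intro is_intv_fibres) (simp_all add: encoding_def)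
  moreover have "s \<in> I \<longleftrightarrow> t \<in> I" if "\<pi> s = \<pi> t" for s t
    using that unfolding I_def by simp
  ultimately show ?thesis
    using that interval_summand_from_vector[OF v\<^sub>0(1) _ below above I_def \<phi>] t\<^sub>1(1) by blast
qed

end

text \<open>Dimensions are constant on the fibres of an encoding, so the choice of the representative
  \<open>inv \<pi> j\<close> of a fibre does not matter.\<close>

definition enc_dim :: "'k::field pmod \<Rightarrow> (real \<Rightarrow> nat) \<Rightarrow> nat" where
  "enc_dim X \<pi> = (\<Sum>j\<in>range \<pi>. VS.dim (sp X (inv \<pi> j)))"

lemma dim_eq_same_fibre:
  assumes X: "is_pmod X" and \<pi>: "encoding X \<pi>" and st: "\<pi> s = \<pi> t"
  shows "VS.dim (sp X s) = VS.dim (sp X t)"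
  using dim_eq_if_lin_on_bij[OF is_pmod_lin_on[OF X] encoding_bij[OF \<pi>] is_pmod_subspace[OF X]
      is_pmod_subspace[OF X]] st
  by (metis nle_le)

lemma enc_dim_less:
  assumes X: "is_pmod X" "encoding X \<pi>" "\<And>t. fin_dim (sp X t)" and Y: "is_pmod Y" "encoding Y \<pi>"
    and sub: "\<And>t. sp Y t \<subseteq> sp X t" and psub: "sp Y t\<^sub>1 \<subset> sp X t\<^sub>1"
  shows "enc_dim Y \<pi> < enc_dim X \<pi>"
  unfolding enc_dim_def
proof (rule sum_strict_mono_ex1)
  show "finite (range \<pi>)"
    using X(2) by (simp add: encoding_def)
  show "\<forall>j\<in>range \<pi>. VS.dim (sp Y (inv \<pi> j)) \<le> VS.dim (sp X (inv \<pi> j))"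
    using dim_subset[OF is_pmod_subspace[OF Y(1)] is_pmod_subspace[OF X(1)] X(3) sub] by blast
  have "\<pi> (inv \<pi> (\<pi> t\<^sub>1)) = \<pi> t\<^sub>1"
    by (simp add: f_inv_into_f)
  then show "\<exists>j\<in>range \<pi>. VS.dim (sp Y (inv \<pi> j)) < VS.dim (sp X (inv \<pi> j))"
    using dim_psubset[OF is_pmod_subspace[OF Y(1)] is_pmod_subspace[OF X(1)] X(3) psub]
      dim_eq_same_fibre[OF X(1,2)] dim_eq_same_fibre[OF Y] by (metis rangeI)
qed

lemma pmod_iso_intsum_Nil:
  fixes X :: "'k::field pmod"
  assumes X: "is_pmod X" and zero: "\<And>t. sp X t = {0}"
  shows "pmod_iso X (intsum [])"
proof -
  have sp: "sp (intsum [] :: 'k pmod) t = {0}" for t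
    by (auto simp: sp_intsum coord_def)
  have "is_hom X (intsum []) (\<lambda>t v. v)"
    using zero is_pmod_mp_0[OF X] by (auto simp: is_hom_def lin_on_iff sp mp_intsum)
  moreover have "bij_betw (\<lambda>v. v) (sp X t) (sp (intsum []) t)" for t
    using zero sp by simp
  ultimately show ?thesis
    unfolding pmod_iso_def by blast
qed

lemma barcode_exists_encoding:
  assumes "is_pmod X" "\<And>t. fin_dim (sp X t)" "encoding X \<pi>"
  shows "\<exists>Is. (\<forall>I\<in>set Is. is_intv I) \<and> pmod_iso X (intsum Is)"
  using assms
proof (induction "enc_dim X \<pi>" arbitrary: X rule: less_induct)
  case less
  show ?case
  proof (cases "\<forall>t. sp X t = {0}")
    case True
    then show ?thesis
      using pmod_iso_intsum_Nil[OF less.prems(1)] by (metis empty_iff list.set(1))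
  next
    case False
    then obtain I r e where S: "interval_summand X I r e" and I: "is_intv I"
      and fibres: "\<And>s t. \<pi> s = \<pi> t \<Longrightarrow> s \<in> I \<longleftrightarrow> t \<in> I"
      using interval_summand_exists[OF less.prems(1,3)] by blast
    interpret S: interval_summand X I r e
      by (rule S)
    have enc: "encoding S.complement \<pi>"
      by (rule S.encoding_complement[OF less.prems(3) fibres])
    obtain t where "t \<in> I"
      using I by (auto simp: is_intv_def)
    moreover have "sp S.complement s \<subseteq> sp X s" for s
      by (auto simp: S.sp_complement)
    ultimately have "enc_dim S.complement \<pi> < enc_dim X \<pi>"
      using enc_dim_less[OF less.prems(1,3,2) S.is_pmod_complement enc] S.sp_complement_psubset by blast
    then obtain Is where "\<forall>I\<in>set Is. is_intv I" "pmod_iso S.complement (intsum Is)"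
      using less.hyps S.is_pmod_complement S.fin_dim_complement[OF less.prems(2)] enc by blast
    then show ?thesis
      using S.pmod_iso_intsum_Cons I by (metis set_ConsD)
  qed
qed

theorem barcode_exists:
  assumes "fin_enc X"
  shows "\<exists>Is. (\<forall>I\<in>set Is. is_intv I) \<and> pmod_iso X (intsum Is)"
  using assms barcode_exists_encoding by (metis fin_enc_iff_encoding)

section \<open>Comparing \<open>T\<^sub>l\<close> with \<open>T\<^sub>k\<close>\<close>

lemma sum_antitone_le_real:
  fixes g :: "nat \<Rightarrow> real"
  assumes anti: "\<And>i j. i \<le> j \<Longrightarrow> g j \<le> g i" and "k \<le> l"
  shows "real k * (\<Sum>i<l. g i) \<le> real l * (\<Sum>i<k. g i)"
  using \<open>k \<le> l\<close>
proof (induction l rule: dec_induct)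
  case (step m)
  have "real k * g m = (\<Sum>i<k. g m)"
    by simp
  also have "\<dots> \<le> (\<Sum>i<k. g i)"
    using step.hyps(1) by (intro sum_mono anti) auto
  finally show ?case
    using step.IH by (simp add: algebra_simps)
qed simp

lemma sum_antitone_le_cmult_real:
  fixes g :: "nat \<Rightarrow> real"
  assumes nn: "\<And>i. 0 \<le> g i" and anti: "\<And>i j. i \<le> j \<Longrightarrow> g j \<le> g i" and k: "1 \<le> k"
  shows "(\<Sum>i<l. g i) \<le> max 1 (real l / real k) * (\<Sum>i<k. g i)"
proof (cases "l \<le> k")
  case True
  then have "(\<Sum>i<l. g i) \<le> (\<Sum>i<k. g i)"
    using nn by (intro sum_mono2) auto
  also have "\<dots> \<le> max 1 (real l / real k) * (\<Sum>i<k. g i)"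
    using mult_right_mono[OF max.cobounded1[of 1 "real l / real k"] sum_nonneg[of "{..<k}" g]] nn by simp
  finally show ?thesis .
next
  case False
  then have "(\<Sum>i<l. g i) \<le> real l / real k * (\<Sum>i<k. g i)"
    using sum_antitone_le_real[of g k l, OF anti] k by (simp add: field_simps)
  also have "\<dots> \<le> max 1 (real l / real k) * (\<Sum>i<k. g i)"
    using nn by (intro mult_right_mono sum_nonneg) auto
  finally show ?thesis .
qed

lemma sum_antitone_le_cmult:
  fixes f :: "nat \<Rightarrow> ereal"
  assumes nn: "\<And>i. 0 \<le> f i" and anti: "\<And>i j. i \<le> j \<Longrightarrow> f j \<le> f i" and k: "1 \<le> k"
  shows "(\<Sum>i<l. f i) \<le> ereal (max 1 (real l / real k)) * (\<Sum>i<k. f i)"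
proof (cases "(\<Sum>i<k. f i) = \<infinity>")
  case True
  then show ?thesis
    by (simp add: max_def)
next
  case False
  have "sum f {0} \<le> (\<Sum>i<k. f i)"
    using k nn by (intro sum_mono2) auto
  then have "f i \<le> (\<Sum>i<k. f i)" for i
    using anti[of 0 i] by simp
  then have "\<bar>f i\<bar> \<noteq> \<infinity>" for i
    using False nn[of i] by (metis abs_ereal_ge0 ereal_infty_less_eq(1))
  define g where "g i = real_of_ereal (f i)" for i
  have fg: "f i = ereal (g i)" for i
    using \<open>\<bar>f i\<bar> \<noteq> \<infinity>\<close> by (simp add: g_def ereal_real')
  have "(\<Sum>i<l. g i) \<le> max 1 (real l / real k) * (\<Sum>i<k. g i)"
    using nn anti k by (intro sum_antitone_le_cmult_real) (simp_all add: fg)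
  then show ?thesis
    by (simp only: fg sum_ereal times_ereal.simps(1) ereal_less_eq(3))
qed

lemma ilen_nonneg:
  assumes "is_intv I"
  shows "0 \<le> ilen I"
proof -
  obtain x where x: "x \<in> I"
    using assms by (auto simp: is_intv_def)
  have "(INF y\<in>I. ereal y) \<le> ereal x"
    using x by (rule INF_lower)
  also have "\<dots> \<le> (SUP y\<in>I. ereal y)"
    using x by (rule SUP_upper)
  finally show ?thesis
    unfolding ilen_def by (rule ereal_diff_positive)
qed

lemma topk_nonneg:
  assumes "\<forall>I\<in>set Is. is_intv I"
  shows "0 \<le> topk k Is"
  unfolding topk_def
proof (rule sum_list_nonneg)
  fix x assume "x \<in> set (take k (rev (sort (map ilen Is))))"
  then have "x \<in> set (map ilen Is)"
    by (metis in_set_takeD set_rev set_sort)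
  then show "0 \<le> x"
    using ilen_nonneg assms by auto
qed

lemma sum_list_take: "sum_list (take l xs) = (\<Sum>i<l. if i < length xs then xs ! i else 0)"
proof -
  have "sum_list (take l xs) = (\<Sum>i<length (take l xs). take l xs ! i)"
    by (simp add: sum_list_sum_nth atLeast0LessThan)
  also have "\<dots> = (\<Sum>i<min l (length xs). xs ! i)"
    by (intro sum.cong) auto
  also have "\<dots> = (\<Sum>i<l. if i < length xs then xs ! i else 0)"
    by (rule sum.mono_neutral_cong_left) auto
  finally show ?thesis .
qed

lemma topk_le_cmult:
  assumes "1 \<le> k" "\<forall>I\<in>set Is. is_intv I"
  shows "topk l Is \<le> ereal (max 1 (real l / real k)) * topk k Is"
proof -
  define xs where "xs = rev (sort (map ilen Is))"
  define f where "f i = (if i < length xs then xs ! i else 0)" for i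
  have xs_nn: "\<forall>x\<in>set xs. 0 \<le> x"
    using assms(2) ilen_nonneg by (auto simp: xs_def)
  then have nn: "0 \<le> f i" for i
    by (simp add: f_def)
  have sorted: "sorted_wrt (\<ge>) xs"
    unfolding xs_def sorted_wrt_rev by simp
  have "f j \<le> f i" if "i \<le> j" for i j
    using that sorted xs_nn by (cases "i = j") (auto simp: f_def sorted_wrt_iff_nth_less)
  moreover have "topk m Is = (\<Sum>i<m. f i)" for m
    unfolding topk_def xs_def[symmetric] f_def by (rule sum_list_take)
  ultimately show ?thesis
    using sum_antitone_le_cmult[OF nn _ assms(1)] by simp
qed

lemma Tk_le_cmult:
  assumes "fin_enc X" "1 \<le> k"
  shows "Tk l X \<le> ereal (max 1 (real l / real k)) * Tk k X" "0 \<le> Tk k X"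
proof -
  obtain Is where Is: "\<forall>I\<in>set Is. is_intv I" "pmod_iso X (intsum Is)"
    using barcode_exists[OF assms(1)] by blast
  have "is_pmod X"
    using assms(1) by (simp add: fin_enc_def)
  then show "Tk l X \<le> ereal (max 1 (real l / real k)) * Tk k X" "0 \<le> Tk k X"
    using Tk_eq_topk[OF _ Is] topk_le_cmult[OF assms(2) Is(1)] topk_nonneg[OF Is(1)] by simp_all
qed

definition zigzag :: "'k::field pmod \<Rightarrow> 'k pmod \<Rightarrow> nat \<Rightarrow> (nat \<Rightarrow> 'k pmod)
    \<Rightarrow> (nat \<Rightarrow> real \<Rightarrow> 'k Defs.vec \<Rightarrow> 'k Defs.vec) \<Rightarrow> (nat \<Rightarrow> 'k pmod)
    \<Rightarrow> (nat \<Rightarrow> real \<Rightarrow> 'k Defs.vec \<Rightarrow> 'k Defs.vec) \<Rightarrow> bool" where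
  "zigzag M N n C g Q q \<longleftrightarrow> even n \<and> C 0 = M \<and> C n = N \<and> (\<forall>i\<le>n. fin_enc (C i))
     \<and> (\<forall>i\<in>{1..n}. is_hom (zz_src C i) (zz_tgt C i) (g i)
           \<and> is_coker (zz_src C i) (zz_tgt C i) (g i) (Q i) (q i))"

definition zigzag_cost :: "('k::field pmod \<Rightarrow> ereal) \<Rightarrow> nat \<Rightarrow> (nat \<Rightarrow> 'k pmod)
    \<Rightarrow> (nat \<Rightarrow> real \<Rightarrow> 'k Defs.vec \<Rightarrow> 'k Defs.vec) \<Rightarrow> (nat \<Rightarrow> 'k pmod) \<Rightarrow> ereal" where
  "zigzag_cost \<alpha> n C g Q = (\<Sum>i=1..n. \<alpha> (kerm (zz_src C i) (g i)) + \<alpha> (Q i))"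

lemma dpath_eq_Inf_zigzag_cost:
  "dpath \<alpha> M N = Inf {zigzag_cost \<alpha> n C g Q |n C g Q q. zigzag M N n C g Q q}"
  unfolding dpath_def zigzag_def zigzag_cost_def by (rule arg_cong[where f = Inf]) blast

lemma zigzag_fin_enc:
  assumes "zigzag M N n C g Q q" "i \<in> {1..n}"
  shows "fin_enc (kerm (zz_src C i) (g i))" "fin_enc (Q i)"
proof -
  have src: "fin_enc (zz_src C i)" and tgt: "fin_enc (zz_tgt C i)"
    using assms by (auto simp: zigzag_def zz_src_def zz_tgt_def)
  have "is_hom (zz_src C i) (zz_tgt C i) (g i)" "is_coker (zz_src C i) (zz_tgt C i) (g i) (Q i) (q i)"
    using assms by (auto simp: zigzag_def)
  then show "fin_enc (kerm (zz_src C i) (g i))" "fin_enc (Q i)"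
    using fin_enc_kerm[OF src tgt] fin_enc_coker[OF src tgt] by blast+
qed

lemma dpath_le_cmult:
  assumes c: "0 < c"
    and le: "\<And>X. fin_enc X \<Longrightarrow> \<alpha> X \<le> ereal c * \<beta> X" and nn: "\<And>X. fin_enc X \<Longrightarrow> 0 \<le> \<beta> X"
  shows "dpath \<alpha> M N \<le> ereal c * dpath \<beta> M N"
proof -
  let ?Z = "{(n, C, g, Q, q). zigzag M N n C g Q q}"
  have cost_le: "zigzag_cost \<alpha> n C g Q \<le> ereal c * zigzag_cost \<beta> n C g Q"
    if z: "zigzag M N n C g Q q" for n C g Q q
  proof -
    have "zigzag_cost \<alpha> n C g Q
        \<le> (\<Sum>i=1..n. ereal c * \<beta> (kerm (zz_src C i) (g i)) + ereal c * \<beta> (Q i))"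
      unfolding zigzag_cost_def using le zigzag_fin_enc[OF z] by (intro sum_mono add_mono) auto
    also have "\<dots> = (\<Sum>i=1..n. ereal c * (\<beta> (kerm (zz_src C i) (g i)) + \<beta> (Q i)))"
      using nn zigzag_fin_enc[OF z] by (intro sum.cong refl ereal_right_distrib[symmetric]) auto
    also have "\<dots> = ereal c * zigzag_cost \<beta> n C g Q"
      unfolding zigzag_cost_def using nn zigzag_fin_enc[OF z]
      by (intro sum_ereal_right_distrib[symmetric]) (simp add: add_nonneg_nonneg)
    finally show ?thesis .
  qed
  have "dpath \<alpha> M N \<le> Inf {ereal c * zigzag_cost \<beta> n C g Q |n C g Q q. zigzag M N n C g Q q}"
    unfolding dpath_eq_Inf_zigzag_cost by (rule Inf_mono) (use cost_le in blast)
  also have "\<dots> = ereal c * dpath \<beta> M N"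
    unfolding dpath_eq_Inf_zigzag_cost
    by (subst ereal_Inf_cmult[OF c, symmetric]) (rule arg_cong[where f = Inf], blast)
  finally show ?thesis .
qed

theorem mainTheorem14:
  fixes k l :: nat and M N :: "('k::field) pmod"
  assumes "k \<ge> 1" and "l \<ge> 1" and "fin_enc M" and "fin_enc N"
  shows "dpath (Tk l) M N \<le> ereal (max 1 (real l / real k)) * dpath (Tk k) M N"
  by (rule dpath_le_cmult) (use Tk_le_cmult assms(1) in auto)

end
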